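(* Let $\Sigma$ and $\Sigma'$ be projective fans in $\mathbb R^n$ such that $\Sigma'$ is a refinement of $\Sigma$ and $\Sigma(1)=\Sigma'(1)$. Given a simplicial coloring $\Sigma(1)=\Lambda_0\cup\dots\cup\Lambda_n$ of $\Sigma$, the same decomposition is a simplicial coloring of $\Sigma'$, and the two colorings have the same combinatorial degree.
   Context: $\Sigma'$ refines $\Sigma$ means every cone of $\Sigma'$ is contained in a cone of $\Sigma$ and both fans have the same support. A projective fan is the normal fan of a convex $n$-polytope. Let $\Delta\subset\mathbb R^{n+1}$ be the standard $n$-simplex with faces $\Delta_{i_1\dots i_k}=\{y\in\Delta: y_{i_1}=\dots=y_{i_k}=0\}$. A coloring of a fan $\Sigma$ is a decomposition $\Sigma(1)=\Lambda_0\cup\dots\cup\Lambda_n$ (not necessarily disjoint) of its rays into $n+1$ color sets; it is simplicial if no maximal cone contains rays of all $n+1$ colors. For a polytope $P$ with normal fan $\Sigma$, color each facet by the colors of its inner normal ray; this gives closed sets $C_i$ (union of facets of color $i$) with $\bigcup C_i=\partial P$, $\bigcap C_i=\emptyset$, and an order-preserving map $\psi_C$ from proper faces of $P$ to proper faces of $\Delta$, $\psi_C(G)=\Delta_{i_1\dots i_k}$ where $G\subset C_{i_1}\cap\dots\cap C_{i_k}$ with $k$ maximal. The combinatorial degree of the coloring is the integer by which $H_{n-1}(f):H_{n-1}(\partial P)\to H_{n-1}(\partial\Delta)$ acts (with respect to fixed orientations of $\mathbb R^n$ and $\Delta$), for any continuous $f$ with $f(G)\subset\psi_C(G)$ for all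 faces $G$; it is independent of $f$ and of the choice of $P$. *)

theory Defs
  imports "HOL-Analysis.Analysis" "HOL-Homology.Homology"
begin

definition full_polytope :: "(real^'n) set \<Rightarrow> bool" where
  "full_polytope P \<longleftrightarrow> polytope P \<and> aff_dim P = int CARD('n)"

definition normal_cone :: "(real^'n) set \<Rightarrow> (real^'n) set \<Rightarrow> (real^'n) set" where
  "normal_cone P F = {u. \<forall>y\<in>F. \<forall>x\<in>P. inner u y \<le> inner u x}"

definition normal_fan :: "(real^'n) set \<Rightarrow> (real^'n) set set" where
  "normal_fan P = {normal_cone P F | F. F face_of P \<and> F \<noteq> {}}"

definition projective_fan :: "(real^'n) set set \<Rightarrow> bool" where
  "projective_fan S \<longleftrightarrow> (\<exists>P. full_polytope P \<and> S = normal_fan P)"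

definition fan_rays :: "(real^'n) set set \<Rightarrow> (real^'n) set set" where
  "fan_rays S = {\<sigma> \<in> S. aff_dim \<sigma> = 1}"

definition maximal_cones :: "(real^'n) set set \<Rightarrow> (real^'n) set set" where
  "maximal_cones S = {\<sigma> \<in> S. \<not> (\<exists>\<tau>\<in>S. \<sigma> \<subset> \<tau>)}"

definition fan_refines :: "(real^'n) set set \<Rightarrow> (real^'n) set set \<Rightarrow> bool" where
  "fan_refines S' S \<longleftrightarrow> (\<forall>\<sigma>'\<in>S'. \<exists>\<sigma>\<in>S. \<sigma>' \<subseteq> \<sigma>) \<and> \<Union>S' = \<Union>S"

definition coloring :: "(real^'n) set set \<Rightarrow> (nat \<Rightarrow> (real^'n) set set) \<Rightarrow> bool" where
  "coloring S L \<longleftrightarrow> (\<Union>i\<in>{..CARD('n)}. L i) = fan_rays S"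

definition simplicial_coloring :: "(real^'n) set set \<Rightarrow> (nat \<Rightarrow> (real^'n) set set) \<Rightarrow> bool" where
  "simplicial_coloring S L \<longleftrightarrow> coloring S L \<and>
     (\<forall>\<sigma>\<in>maximal_cones S. \<not> (\<forall>i\<in>{..CARD('n)}. \<exists>\<rho>\<in>L i. \<rho> \<subseteq> \<sigma>))"

text \<open>The standard n-simplex in R^{n+1} is \<open>standard_simplex n\<close> (coordinates 0..n).
  Its boundary and its faces Delta_I:\<close>
definition simplex_boundary :: "nat \<Rightarrow> (nat \<Rightarrow> real) set" where
  "simplex_boundary n = {y \<in> standard_simplex n. \<exists>i\<le>n. y i = 0}"

definition simplex_face :: "nat \<Rightarrow> nat set \<Rightarrow> (nat \<Rightarrow> real) set" where
  "simplex_face n I = {y \<in> standard_simplex n. \<forall>i\<in>I. y i = 0}"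

definition color_set :: "(real^'n) set \<Rightarrow> (nat \<Rightarrow> (real^'n) set set) \<Rightarrow> nat \<Rightarrow> (real^'n) set" where
  "color_set P L i = \<Union>{G. G facet_of P \<and> normal_cone P G \<in> L i}"

definition psi_C :: "(real^'n) set \<Rightarrow> (nat \<Rightarrow> (real^'n) set set) \<Rightarrow> (real^'n) set \<Rightarrow> (nat \<Rightarrow> real) set" where
  "psi_C P L G = simplex_face CARD('n) {i. i \<le> CARD('n) \<and> G \<subseteq> color_set P L i}"

definition compatible_map :: "(real^'n) set \<Rightarrow> (nat \<Rightarrow> (real^'n) set set) \<Rightarrow> ((real^'n) \<Rightarrow> (nat \<Rightarrow> real)) \<Rightarrow> bool" where
  "compatible_map P L f \<longleftrightarrow>
     continuous_map (top_of_set (frontier P))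
        (subtopology (powertop_real UNIV) (simplex_boundary CARD('n))) f \<and>
     (\<forall>G. G face_of P \<and> G \<noteq> {} \<and> G \<noteq> P \<longrightarrow> f ` G \<subseteq> psi_C P L G)"

text \<open>Fixed orientation of R^n: a fixed enumeration of the coordinate index type.\<close>
definition coord_enum :: "nat \<Rightarrow> 'n::finite" where
  "coord_enum = (SOME e. bij_betw e {..<CARD('n)} (UNIV :: 'n set))"

text \<open>Chart boundary P -> S^{n-1}: radial projection from a fixed interior point,
  read in the fixed coordinates (orientation of R^n).\<close>
definition polytope_chart :: "(real^'n) set \<Rightarrow> (real^'n) \<Rightarrow> (nat \<Rightarrow> real)" where
  "polytope_chart P x =
     (let c = (SOME c. c \<in> interior P) in
      (\<lambda>i. if i < CARD('n) then ((x - c) $ coord_enum i) / norm (x - c) else 0))"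

text \<open>Chart boundary Delta -> S^{n-1}: drop coordinate 0 (a linear isomorphism of the
  affine hull of Delta onto R^n) and project radially from the barycenter
  (fixed orientation of Delta).\<close>
definition simplex_chart :: "nat \<Rightarrow> (nat \<Rightarrow> real) \<Rightarrow> (nat \<Rightarrow> real)" where
  "simplex_chart n y =
     (let L = sqrt (\<Sum>i<n. (y (Suc i) - 1 / real (Suc n))\<^sup>2) in
      (\<lambda>i. if i < n then (y (Suc i) - 1 / real (Suc n)) / L else 0))"

text \<open>The integer by which H_{n-1}(f) acts, computed as a Brouwer degree on S^{n-1}
  (reduced homology, which agrees with homology in degree n-1 for n \<ge> 2).\<close>
definition comb_degree :: "(real^'n) set \<Rightarrow> ((real^'n) \<Rightarrow> (nat \<Rightarrow> real)) \<Rightarrow> int" where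
  "comb_degree P f =
     Brouwer_degree2 (CARD('n) - 1)
       (simplex_chart CARD('n) \<circ> f \<circ> inv_into (frontier P) (polytope_chart P))"

end

theory Submission
  imports Defs
begin

text \<open>A full-dimensional polytope is cut out by the inequalities \<open>min_inner P v \<le> v \<bullet> x\<close>, \<open>v\<close>
  ranging over the generators of the rays of its normal fan, and radial projection from an interior
  point identifies its boundary with the sphere. A compatible map \<open>f\<close> is homotopic in the boundary
  of the simplex, along straight lines, to the canonical map whose \<open>i\<close>-th barycentric coordinate
  is proportional to the product of the slacks of the facets of color \<open>i\<close>: on a facet of color
  \<open>i\<close> both have vanishing \<open>i\<close>-th coordinate.

  If \<open>\<Sigma>'\<close> refines \<open>\<Sigma>\<close> with the same rays, every direction is a nonnegative combination of ray
  generators tight at a common pair of vertices of \<open>P\<close> and \<open>P'\<close>. Hence the constraints tight at a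
  point of \<open>P\<^sub>t = {x. \<forall>v. (1-t) * min_inner P v + t * min_inner P' v \<le> v \<bullet> x}\<close> are tight at a vertex
  of \<open>P\<close> (if \<open>t < 1\<close>) or of \<open>P'\<close> (if \<open>t > 0\<close>), and simpliciality of the coloring at that
  vertex provides a color with no tight facet. So the canonical maps of the polytopes \<open>P\<^sub>t\<close> are
  well defined for all \<open>t\<close> and deform the canonical map of \<open>P\<close> into that of \<open>P'\<close>.\<close>

section \<open>Support functions and facet normals of full polytopes\<close>

definition ray_generator :: "(real^'n) set \<Rightarrow> real^'n" where
  "ray_generator \<rho> = (SOME a. a \<in> \<rho> \<and> a \<noteq> 0)"

abbreviation ray_generators :: "(real^'n) set set \<Rightarrow> (real^'n) set" where
  "ray_generators S \<equiv> ray_generator ` fan_rays S"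

definition min_inner :: "(real^'n) set \<Rightarrow> real^'n \<Rightarrow> real" where
  "min_inner P v = Inf ((\<lambda>x. v \<bullet> x) ` P)"

lemma full_polytope_compact: "full_polytope P \<Longrightarrow> compact P"
  by (simp add: full_polytope_def polytope_imp_compact)

lemma full_polytope_closed: "full_polytope P \<Longrightarrow> closed P"
  by (simp add: full_polytope_def polytope_imp_closed)

lemma full_polytope_convex: "full_polytope P \<Longrightarrow> convex P"
  by (simp add: full_polytope_def polytope_imp_convex)

lemma full_polytope_polyhedron: "full_polytope P \<Longrightarrow> polyhedron P"
  by (simp add: full_polytope_def polytope_imp_polyhedron)

lemma full_polytope_nonempty: "full_polytope P \<Longrightarrow> P \<noteq> {}"
  by (auto simp: full_polytope_def)

lemma full_polytope_affine_hull:
  fixes P :: "(real^'n) set"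
  shows "full_polytope P \<Longrightarrow> affine hull P = UNIV"
  using aff_dim_eq_full[of P] by (simp add: full_polytope_def)

lemma full_polytope_interior_nonempty:
  fixes P :: "(real^'n) set"
  assumes "full_polytope P"
  shows "interior P \<noteq> {}"
proof -
  have "rel_interior P = interior P"
    using full_polytope_affine_hull[OF assms] by (rule rel_interior_interior)
  then show ?thesis
    using rel_interior_eq_empty assms full_polytope_convex full_polytope_nonempty by metis
qed

lemma finite_normal_fan:
  fixes P :: "(real^'n) set"
  assumes "full_polytope P"
  shows "finite (normal_fan P)"
proof -
  have "normal_fan P = normal_cone P ` {F. F face_of P \<and> F \<noteq> {}}"
    unfolding normal_fan_def by blast
  moreover have "finite {F. F face_of P}"
    using finite_polytope_faces assms unfolding full_polytope_def by blast
  ultimately show ?thesis by simp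
qed

lemma min_inner_le:
  fixes P :: "(real^'n) set"
  assumes "compact P" "x \<in> P"
  shows "min_inner P v \<le> v \<bullet> x"
proof -
  have "continuous_on P (\<lambda>x. v \<bullet> x)" by (intro continuous_intros)
  then have "bounded ((\<lambda>x. v \<bullet> x) ` P)"
    using assms compact_continuous_image compact_imp_bounded by blast
  then show ?thesis
    unfolding min_inner_def using assms(2) by (auto intro: cInf_lower bounded_imp_bdd_below)
qed

lemma min_inner_eqI:
  fixes P :: "(real^'n) set"
  assumes "x \<in> P" "\<And>y. y \<in> P \<Longrightarrow> v \<bullet> x \<le> v \<bullet> y"
  shows "min_inner P v = v \<bullet> x"
  unfolding min_inner_def using assms by (intro cInf_eq_minimum) auto

lemma min_inner_attained:
  fixes P :: "(real^'n) set"
  assumes "compact P" "P \<noteq> {}"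
  obtains x where "x \<in> P" "v \<bullet> x = min_inner P v"
proof -
  have "continuous_on P (\<lambda>x. v \<bullet> x)" by (intro continuous_intros)
  then obtain x where "x \<in> P" "\<forall>y\<in>P. v \<bullet> x \<le> v \<bullet> y"
    using continuous_attains_inf[OF assms] by blast
  then show ?thesis using that min_inner_eqI by metis
qed

lemma normal_cone_vertex_iff:
  fixes P :: "(real^'n) set"
  assumes "compact P" "v \<in> P"
  shows "y \<in> normal_cone P {v} \<longleftrightarrow> y \<bullet> v = min_inner P y"
  using assms min_inner_le[OF assms(1)] min_inner_eqI[of v P y]
  unfolding normal_cone_def by (auto intro: antisym)

lemma min_inner_less_interior:
  fixes P :: "(real^'n) set"
  assumes "full_polytope P" "c \<in> interior P" "v \<noteq> 0"
  shows "min_inner P v < v \<bullet> c"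
proof -
  obtain e where e: "e > 0" "ball c e \<subseteq> P" using assms(2) by (meson mem_interior)
  define z where "z = c - (e / 2 / norm v) *\<^sub>R v"
  have "dist c z < e" using e assms(3) by (simp add: z_def dist_norm)
  then have "z \<in> P" using e by auto
  then have "min_inner P v \<le> v \<bullet> z"
    using min_inner_le full_polytope_compact[OF assms(1)] by blast
  also have "v \<bullet> z = v \<bullet> c - (e/2) * norm v"
    using assms(3) by (simp add: z_def inner_diff_right power2_norm_eq_inner[symmetric] power2_eq_square)
  also have "\<dots> < v \<bullet> c" using e assms(3) by simp
  finally show ?thesis .
qed

lemma aff_dim_ray:
  fixes a :: "real^'n"
  assumes "a \<noteq> 0"
  shows "aff_dim {t *\<^sub>R a | t. 0 \<le> t} = 1"
proof -
  let ?R = "{t *\<^sub>R a | t. 0 \<le> t}"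
  have "0 \<in> ?R" "a \<in> ?R"
    by (metis (mono_tags, lifting) mem_Collect_eq order_refl scale_zero_left,
        metis (mono_tags, lifting) mem_Collect_eq zero_le_one scale_one)
  then have "{0, a} \<subseteq> ?R" by blast
  then have "aff_dim {0, a} \<le> aff_dim ?R" by (rule aff_dim_subset)
  moreover have "?R \<subseteq> affine hull {0, a}"
  proof
    fix x assume "x \<in> ?R"
    then obtain t where "x = t *\<^sub>R a" by auto
    then show "x \<in> affine hull {0, a}"
      unfolding affine_hull_2 by (intro CollectI exI[of _ "1 - t"] exI[of _ t]) simp
  qed
  then have "aff_dim ?R \<le> aff_dim (affine hull {0, a})" by (rule aff_dim_subset)
  ultimately show ?thesis using assms by (simp split: if_splits)
qed

lemma normal_cone_scaleR:
  assumes "x \<in> normal_cone P G" "0 \<le> t"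
  shows "t *\<^sub>R x \<in> normal_cone P G"
  using assms unfolding normal_cone_def by (auto intro: mult_left_mono)

lemma normal_cone_pointed:
  fixes P :: "(real^'n) set"
  assumes full: "full_polytope P" and G: "G face_of P" "G \<noteq> {}"
    and a: "a \<in> normal_cone P G" "-a \<in> normal_cone P G"
  shows "a = 0"
proof (rule ccontr)
  assume a0: "a \<noteq> 0"
  obtain y where y: "y \<in> G" using G by blast
  have const: "a \<bullet> z = a \<bullet> y" if "z \<in> P" for z
  proof -
    have "a \<bullet> y \<le> a \<bullet> z" "(-a) \<bullet> y \<le> (-a) \<bullet> z"
      using a y that unfolding normal_cone_def by blast+
    then show ?thesis by simp
  qed
  obtain c where c: "c \<in> interior P" using full_polytope_interior_nonempty[OF full] by blast
  have "min_inner P a = a \<bullet> y"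
    using y G face_of_imp_subset const by (intro min_inner_eqI) auto
  moreover have "a \<bullet> c = a \<bullet> y" using c interior_subset const by blast
  ultimately show False using min_inner_less_interior[OF full c a0] by simp
qed

lemma fan_ray_generator:
  fixes P :: "(real^'n) set"
  assumes full: "full_polytope P" and \<rho>: "\<rho> \<in> fan_rays (normal_fan P)"
  shows "ray_generator \<rho> \<in> \<rho>" "ray_generator \<rho> \<noteq> 0"
    and "\<rho> = {t *\<^sub>R ray_generator \<rho> | t. 0 \<le> t}"
proof -
  obtain G where G: "\<rho> = normal_cone P G" "G face_of P" "G \<noteq> {}"
    using \<rho> unfolding fan_rays_def normal_fan_def by blast
  have ad: "aff_dim \<rho> = 1" using \<rho> by (simp add: fan_rays_def)
  have z: "0 \<in> \<rho>" using G by (simp add: normal_cone_def)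
  have "\<exists>a. a \<in> \<rho> \<and> a \<noteq> 0"
  proof (rule ccontr)
    assume "\<not> ?thesis"
    then have "\<rho> = {0}" using z by auto
    then show False using ad by simp
  qed
  then have "ray_generator \<rho> \<in> \<rho> \<and> ray_generator \<rho> \<noteq> 0"
    unfolding ray_generator_def by (rule someI_ex)
  then have a: "ray_generator \<rho> \<in> \<rho>" "ray_generator \<rho> \<noteq> 0" by auto
  then show "ray_generator \<rho> \<in> \<rho>" "ray_generator \<rho> \<noteq> 0" by auto
  let ?a = "ray_generator \<rho>"
  show "\<rho> = {t *\<^sub>R ?a | t. 0 \<le> t}"
  proof
    show "{t *\<^sub>R ?a | t. 0 \<le> t} \<subseteq> \<rho>"
      using normal_cone_scaleR a G by auto
  next
    show "\<rho> \<subseteq> {t *\<^sub>R ?a | t. 0 \<le> t}"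
    proof
      fix u assume u: "u \<in> \<rho>"
      have "{0, ?a} \<subseteq> \<rho>" "aff_dim {0, ?a} = aff_dim \<rho>" using z a ad by auto
      then have "affine hull {0, ?a} = affine hull \<rho>" using aff_dim_eq_full_gen by blast
      then have "u \<in> affine hull {0, ?a}" using u by (simp add: hull_inc)
      then obtain q where uq: "u = q *\<^sub>R ?a" unfolding affine_hull_2 by auto
      have "0 \<le> q"
      proof (rule ccontr)
        assume q: "\<not> 0 \<le> q"
        then have "(1 / (-q)) *\<^sub>R u = -?a" using uq by simp
        moreover have "(1 / (-q)) *\<^sub>R u \<in> \<rho>"
          using normal_cone_scaleR[of u P G "1 / (-q)"] u G q by simp
        ultimately show False using normal_cone_pointed[OF full G(2,3)] a G(1) by metis
      qed
      then show "u \<in> {t *\<^sub>R ?a | t. 0 \<le> t}" using uq by auto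
    qed
  qed
qed

lemma functional_constant_on_facet_parallel:
  fixes P :: "(real^'n) set"
  assumes full: "full_polytope P" and a0: "a \<noteq> 0"
    and Feq: "F = P \<inter> {x. a \<bullet> x = b}" and fac: "F facet_of P"
    and y0: "y0 \<in> F" and const: "\<And>y. y \<in> F \<Longrightarrow> u \<bullet> y = u \<bullet> y0"
  shows "u = ((u \<bullet> a) / (a \<bullet> a)) *\<^sub>R a"
proof -
  define s where "s = (u \<bullet> a) / (a \<bullet> a)"
  define w where "w = u - s *\<^sub>R a"
  have wa: "a \<bullet> w = 0" using a0 by (simp add: w_def s_def inner_diff_right inner_commute)
  have ay0: "a \<bullet> y0 = b" using y0 Feq by auto
  have "w = 0"
  proof (rule ccontr)
    assume wne: "w \<noteq> 0"
    let ?H1 = "{x. a \<bullet> x = b}"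
    let ?H2 = "{x. w \<bullet> x = w \<bullet> y0}"
    have "F \<subseteq> ?H1 \<inter> ?H2"
      using Feq const ay0 by (auto simp: w_def inner_diff_left)
    then have le: "aff_dim F \<le> aff_dim (?H1 \<inter> ?H2)" by (rule aff_dim_subset)
    have "y0 + w \<in> ?H1" "y0 + w \<notin> ?H2" using ay0 wa wne by (simp_all add: inner_add_right)
    then have "\<not> ?H1 \<subseteq> ?H2" by blast
    moreover have "?H1 \<inter> ?H2 \<noteq> {}" using ay0 by auto
    ultimately have "aff_dim (?H1 \<inter> ?H2) = aff_dim ?H1 - 1"
      using aff_dim_affine_Int_hyperplane[of ?H1 w "w \<bullet> y0"] affine_hyperplane by auto
    also have "aff_dim ?H1 = int CARD('n) - 1" using a0 by simp
    finally have "aff_dim F \<le> int CARD('n) - 2" using le by simp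
    moreover have "aff_dim F = int CARD('n) - 1"
      using fac full by (simp add: facet_of_def full_polytope_def)
    ultimately show False by simp
  qed
  then show ?thesis by (simp add: w_def s_def)
qed

lemma normal_cone_facet:
  fixes P :: "(real^'n) set"
  assumes full: "full_polytope P" and a0: "a \<noteq> 0" and sub: "P \<subseteq> {x. a \<bullet> x \<le> b}"
    and Feq: "F = P \<inter> {x. a \<bullet> x = b}" and fac: "F facet_of P"
  shows "normal_cone P F = {t *\<^sub>R (-a) | t. 0 \<le> t}"
proof
  show "{t *\<^sub>R (-a) | t. 0 \<le> t} \<subseteq> normal_cone P F"
  proof
    fix u assume "u \<in> {t *\<^sub>R (-a) | t. 0 \<le> t}"
    then obtain t where t: "0 \<le> t" "u = t *\<^sub>R (-a)" by auto
    have "t * (a \<bullet> x) \<le> t * b" if "x \<in> P" for x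
      using sub that t(1) by (auto intro: mult_left_mono)
    then show "u \<in> normal_cone P F"
      using Feq t unfolding normal_cone_def by auto
  qed
next
  show "normal_cone P F \<subseteq> {t *\<^sub>R (-a) | t. 0 \<le> t}"
  proof
    fix u assume u: "u \<in> normal_cone P F"
    have FP: "F \<subseteq> P" using fac by (auto simp: facet_of_def face_of_def)
    obtain y0 where y0: "y0 \<in> F" using fac by (auto simp: facet_of_def)
    have uineq: "\<And>y x. y \<in> F \<Longrightarrow> x \<in> P \<Longrightarrow> u \<bullet> y \<le> u \<bullet> x"
      using u unfolding normal_cone_def by blast
    have "\<And>y. y \<in> F \<Longrightarrow> u \<bullet> y = u \<bullet> y0"
      using uineq y0 FP by (meson antisym subsetD)
    then obtain s where ueq: "u = s *\<^sub>R a"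
      using functional_constant_on_facet_parallel[OF full a0 Feq fac y0] by blast
    obtain c where c: "c \<in> interior P" using full_polytope_interior_nonempty[OF full] by blast
    have "min_inner P (-a) = (-a) \<bullet> y0"
      using y0 FP Feq sub by (intro min_inner_eqI) auto
    then have ac: "a \<bullet> c < b"
      using min_inner_less_interior[OF full c, of "-a"] a0 y0 Feq by simp
    have "u \<bullet> y0 \<le> u \<bullet> c" using uineq y0 c interior_subset by blast
    then have "s * b \<le> s * (a \<bullet> c)" using ueq y0 Feq by simp
    then have "s \<le> 0" using ac by (metis mult_le_cancel_left not_le)
    then show "u \<in> {t *\<^sub>R (-a) | t. 0 \<le> t}" using ueq
      by (intro CollectI exI[of _ "-s"]) auto
  qed
qed

lemma normal_cone_facet_in_fan_rays:
  fixes P :: "(real^'n) set"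
  assumes full: "full_polytope P" and fac: "F facet_of P"
  shows "normal_cone P F \<in> fan_rays (normal_fan P)"
proof -
  obtain a b where ab: "a \<noteq> 0" "P \<subseteq> {x. a \<bullet> x \<le> b}" "F = P \<inter> {x. a \<bullet> x = b}"
    using facet_of_polyhedron[OF full_polytope_polyhedron[OF full] fac] by blast
  have "aff_dim (normal_cone P F) = 1"
    using normal_cone_facet[OF full ab fac] aff_dim_ray[of "-a"] ab(1) by simp
  moreover have "normal_cone P F \<in> normal_fan P"
    using fac unfolding normal_fan_def facet_of_def by blast
  ultimately show ?thesis unfolding fan_rays_def by simp
qed

lemma ray_generator_facet_tight:
  fixes P :: "(real^'n) set"
  assumes full: "full_polytope P" and fac: "F facet_of P" and x: "x \<in> F"
  shows "ray_generator (normal_cone P F) \<bullet> x = min_inner P (ray_generator (normal_cone P F))"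
proof -
  let ?g = "ray_generator (normal_cone P F)"
  have "?g \<in> normal_cone P F"
    using fan_ray_generator(1)[OF full normal_cone_facet_in_fan_rays[OF full fac]] .
  then have "\<And>z. z \<in> P \<Longrightarrow> ?g \<bullet> x \<le> ?g \<bullet> z" using x unfolding normal_cone_def by blast
  moreover have "x \<in> P" using x fac facet_of_imp_subset by blast
  ultimately show ?thesis using min_inner_eqI by metis
qed

lemma full_polytope_ray_halfspaces:
  fixes P :: "(real^'n) set"
  assumes full: "full_polytope P"
  shows "P = {x. \<forall>g\<in>ray_generators (normal_fan P). min_inner P g \<le> g \<bullet> x}"
proof
  show "P \<subseteq> {x. \<forall>g\<in>ray_generators (normal_fan P). min_inner P g \<le> g \<bullet> x}"
    using min_inner_le full_polytope_compact[OF full] by blast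
next
  show "{x. \<forall>g\<in>ray_generators (normal_fan P). min_inner P g \<le> g \<bullet> x} \<subseteq> P"
  proof
    fix x assume x: "x \<in> {x. \<forall>g\<in>ray_generators (normal_fan P). min_inner P g \<le> g \<bullet> x}"
    obtain H where "finite H" and seq: "P = affine hull P \<inter> \<Inter>H"
       and faces: "\<And>h. h \<in> H \<Longrightarrow> \<exists>a b. a \<noteq> 0 \<and> h = {x. a \<bullet> x \<le> b}"
       and min: "\<And>F'. F' \<subset> H \<Longrightarrow> P \<subset> (affine hull P) \<inter> \<Inter>F'"
      using full_polytope_polyhedron[OF full] by (simp add: polyhedron_Int_affine_minimal) meson
    then obtain a b where ab: "\<And>h. h \<in> H \<Longrightarrow> a h \<noteq> 0 \<and> h = {x. a h \<bullet> x \<le> b h}"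
      by metis
    have "x \<in> h" if h: "h \<in> H" for h
    proof -
      define F where "F = P \<inter> {x. a h \<bullet> x = b h}"
      have fac: "F facet_of P"
        using facet_of_polyhedron_explicit[OF \<open>finite H\<close> seq ab min] h F_def by blast
      have sub: "P \<subseteq> {x. a h \<bullet> x \<le> b h}" using h ab seq by blast
      let ?\<rho> = "normal_cone P F"
      let ?g = "ray_generator ?\<rho>"
      have \<rho>: "?\<rho> \<in> fan_rays (normal_fan P)" using normal_cone_facet_in_fan_rays[OF full fac] .
      then obtain t where t: "0 \<le> t" "?g = t *\<^sub>R (- a h)"
        using fan_ray_generator(1)[OF full] normal_cone_facet[OF full _ sub F_def fac] ab h by blast
      then have "0 < t" using fan_ray_generator(2)[OF full \<rho>] by (cases "t = 0") auto
      obtain y0 where y0: "y0 \<in> F" using fac unfolding facet_of_def by blast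
      have "- t * b h = min_inner P ?g"
        using ray_generator_facet_tight[OF full fac y0] y0 t by (simp add: F_def)
      also have "\<dots> \<le> ?g \<bullet> x" using x \<rho> by auto
      finally have "- t * b h \<le> - t * (a h \<bullet> x)" using t by simp
      then have "a h \<bullet> x \<le> b h" using \<open>0 < t\<close> by simp
      then show "x \<in> h" using ab h by blast
    qed
    then show "x \<in> P" using seq full_polytope_affine_hull[OF full] by blast
  qed
qed

lemma in_full_polytopeI:
  fixes P :: "(real^'n) set"
  assumes "full_polytope P" "\<And>g. g \<in> ray_generators (normal_fan P) \<Longrightarrow> min_inner P g \<le> g \<bullet> x"
  shows "x \<in> P"
  using assms full_polytope_ray_halfspaces[OF assms(1)] by blast

lemma frontier_full_polytope_facet:
  fixes P :: "(real^'n) set"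
  assumes full: "full_polytope P" and x: "x \<in> frontier P"
  obtains F where "F facet_of P" "x \<in> F"
proof -
  have "rel_interior P = interior P"
    using full_polytope_affine_hull[OF full] by (rule rel_interior_interior)
  then have "frontier P = P - rel_interior P"
    using full_polytope_closed[OF full] by (simp add: frontier_def closure_closed)
  then show ?thesis
    using rel_boundary_of_polyhedron[OF full_polytope_polyhedron[OF full]] x that by blast
qed

lemma ray_generator_inner_negative:
  fixes P :: "(real^'n) set"
  assumes full: "full_polytope P" and y: "y \<noteq> 0"
  shows "\<exists>g\<in>ray_generators (normal_fan P). g \<bullet> y < 0"
proof (rule ccontr)
  assume "\<not> ?thesis"
  then have ge: "\<forall>g\<in>ray_generators (normal_fan P). 0 \<le> g \<bullet> y" by (auto simp: not_less)
  obtain x0 where x0: "x0 \<in> P" using full_polytope_nonempty[OF full] by blast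
  have inP: "x0 + s *\<^sub>R y \<in> P" if s: "0 \<le> s" for s
  proof -
    have "min_inner P g \<le> g \<bullet> (x0 + s *\<^sub>R y)" if "g \<in> ray_generators (normal_fan P)" for g
    proof -
      have "0 \<le> s * (g \<bullet> y)" using s ge that by auto
      then show ?thesis
        using min_inner_le[OF full_polytope_compact[OF full] x0, of g] by (simp add: inner_add_right)
    qed
    then show ?thesis by (rule in_full_polytopeI[OF full])
  qed
  obtain B where B: "\<forall>x\<in>P. norm x \<le> B"
    using full polytope_imp_bounded bounded_iff unfolding full_polytope_def by metis
  define s where "s = (B + norm x0 + 1) / norm y"
  have B0: "0 \<le> B" using B x0 norm_ge_zero order_trans by blast
  then have s0: "0 \<le> s" by (simp add: s_def)
  have "norm (s *\<^sub>R y) = B + norm x0 + 1" using y B0 by (simp add: s_def)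
  moreover have "norm (s *\<^sub>R y) \<le> norm (x0 + s *\<^sub>R y) + norm x0"
    by (metis add.commute add_diff_cancel_left' norm_triangle_ineq4)
  moreover have "norm (x0 + s *\<^sub>R y) \<le> B" using B inP[OF s0] by blast
  ultimately show False by simp
qed

section \<open>Refinement and simplicial colorings\<close>

lemma finite_fan_maximal_cone:
  assumes "finite S" "\<sigma> \<in> S"
  obtains \<tau> where "\<tau> \<in> maximal_cones S" "\<sigma> \<subseteq> \<tau>"
proof -
  let ?A = "{\<tau>\<in>S. \<sigma> \<subseteq> \<tau>}"
  have "finite ?A" "?A \<noteq> {}" using assms by auto
  then obtain m where m: "m \<in> ?A" "\<forall>b\<in>?A. m \<le> b \<longrightarrow> m = b"
    using finite_has_maximal by meson
  have "m \<in> maximal_cones S" unfolding maximal_cones_def using m by auto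
  then show ?thesis using that m by simp
qed

lemma simplicial_coloring_colors_rays:
  assumes "simplicial_coloring S L" "i \<le> CARD('n)"
  shows "L i \<subseteq> fan_rays (S :: (real^'n) set set)"
  using assms unfolding simplicial_coloring_def coloring_def by auto

lemma simplicial_coloring_refinement:
  fixes S S' :: "(real^'n) set set"
  assumes fin: "finite S" and ref: "fan_refines S' S" and rays: "fan_rays S = fan_rays S'"
    and sc: "simplicial_coloring S L"
  shows "simplicial_coloring S' L"
  unfolding simplicial_coloring_def
proof (intro conjI ballI)
  show "coloring S' L" using rays sc by (simp add: simplicial_coloring_def coloring_def)
next
  fix \<sigma>' assume "\<sigma>' \<in> maximal_cones S'"
  then have "\<sigma>' \<in> S'" by (simp add: maximal_cones_def)
  then obtain \<sigma> where \<sigma>: "\<sigma> \<in> S" "\<sigma>' \<subseteq> \<sigma>"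
    using ref unfolding fan_refines_def by blast
  obtain \<tau> where \<tau>: "\<tau> \<in> maximal_cones S" "\<sigma> \<subseteq> \<tau>"
    using finite_fan_maximal_cone[OF fin \<sigma>(1)] .
  have "\<not> (\<forall>i\<in>{..CARD('n)}. \<exists>\<rho>\<in>L i. \<rho> \<subseteq> \<tau>)"
    using sc \<tau>(1) unfolding simplicial_coloring_def by blast
  moreover have "\<sigma>' \<subseteq> \<tau>" using \<sigma>(2) \<tau>(2) by (rule order_trans)
  ultimately show "\<not> (\<forall>i\<in>{..CARD('n)}. \<exists>\<rho>\<in>L i. \<rho> \<subseteq> \<sigma>')"
    by (meson order_trans)
qed

lemma vertex_missing_color:
  fixes P :: "(real^'n) set"
  assumes full: "full_polytope P" and v: "{v} face_of P"
    and sc: "simplicial_coloring (normal_fan P) L"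
  obtains i where "i \<le> CARD('n)"
    "\<And>\<rho>. \<rho> \<in> L i \<Longrightarrow> ray_generator \<rho> \<bullet> v \<noteq> min_inner P (ray_generator \<rho>)"
proof -
  have "normal_cone P {v} \<in> normal_fan P" using v unfolding normal_fan_def by blast
  then obtain \<tau> where \<tau>: "\<tau> \<in> maximal_cones (normal_fan P)" "normal_cone P {v} \<subseteq> \<tau>"
    using finite_fan_maximal_cone[OF finite_normal_fan[OF full]] by blast
  then obtain i where i: "i \<le> CARD('n)" "\<not> (\<exists>\<rho>\<in>L i. \<rho> \<subseteq> \<tau>)"
    using sc unfolding simplicial_coloring_def by auto
  have "ray_generator \<rho> \<bullet> v \<noteq> min_inner P (ray_generator \<rho>)" if \<rho>: "\<rho> \<in> L i" for \<rho>
  proof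
    assume eq: "ray_generator \<rho> \<bullet> v = min_inner P (ray_generator \<rho>)"
    have r: "\<rho> \<in> fan_rays (normal_fan P)"
      using simplicial_coloring_colors_rays[OF sc i(1)] \<rho> by blast
    have "v \<in> P" using v face_of_imp_subset by blast
    then have g: "ray_generator \<rho> \<in> normal_cone P {v}"
      using eq normal_cone_vertex_iff[OF full_polytope_compact[OF full]] by blast
    have "\<rho> \<subseteq> normal_cone P {v}"
    proof
      fix x assume "x \<in> \<rho>"
      then obtain t where "x = t *\<^sub>R ray_generator \<rho>" "0 \<le> t"
        using fan_ray_generator(3)[OF full r] by blast
      then show "x \<in> normal_cone P {v}" using normal_cone_scaleR[OF g] by simp
    qed
    then show False using \<tau>(2) i(2) \<rho> by blast
  qed
  then show ?thesis using that i(1) by blast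
qed

section \<open>Tight constraints along the segment between two polytopes\<close>

lemma feasible_direction:
  fixes P :: "(real^'n) set"
  assumes full: "full_polytope P" and x: "x \<in> P"
    and d: "\<And>g. g \<in> ray_generators (normal_fan P) \<Longrightarrow> g \<bullet> x = min_inner P g \<Longrightarrow> 0 \<le> g \<bullet> d"
  obtains \<epsilon> where "\<epsilon> > 0" "x + \<epsilon> *\<^sub>R d \<in> P"
proof -
  let ?V = "ray_generators (normal_fan P)"
  define A where "A = {g\<in>?V. g \<bullet> x = min_inner P g}"
  define Op where "Op = (\<Inter>g\<in>?V - A. {z. min_inner P g < g \<bullet> z})"
  have "finite ?V" using finite_normal_fan[OF full] by (simp add: fan_rays_def)
  then have "open Op" unfolding Op_def by (intro open_INT) (auto simp: open_halfspace_gt)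
  moreover have "x \<in> Op"
  proof -
    have "min_inner P g < g \<bullet> x" if "g \<in> ?V - A" for g
    proof -
      have "g \<bullet> x \<noteq> min_inner P g" using that by (simp add: A_def)
      moreover have "min_inner P g \<le> g \<bullet> x"
        using min_inner_le[OF full_polytope_compact[OF full] x] .
      ultimately show ?thesis by simp
    qed
    then show ?thesis unfolding Op_def by blast
  qed
  ultimately obtain r where r: "r > 0" "ball x r \<subseteq> Op" using open_contains_ball by blast
  define \<epsilon> where "\<epsilon> = r / (2 * (norm d + 1))"
  have "0 < 2 * (norm d + 1)" by (smt (verit) norm_ge_zero)
  then have e0: "\<epsilon> > 0" using r unfolding \<epsilon>_def by (simp only: divide_pos_pos)
  have "norm (\<epsilon> *\<^sub>R d) \<le> \<epsilon> * (norm d + 1)" using e0 by simp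
  also have "\<dots> = r / 2" using \<open>0 < 2 * (norm d + 1)\<close> by (simp add: \<epsilon>_def field_simps)
  also have "\<dots> < r" using r by simp
  finally have Op: "x + \<epsilon> *\<^sub>R d \<in> Op" using r by (auto simp: dist_norm)
  have "x + \<epsilon> *\<^sub>R d \<in> P"
  proof (rule in_full_polytopeI[OF full])
    fix g assume g: "g \<in> ?V"
    show "min_inner P g \<le> g \<bullet> (x + \<epsilon> *\<^sub>R d)"
    proof (cases "g \<in> A")
      case True
      then show ?thesis using d e0 by (simp add: A_def inner_add_right)
    next
      case False
      then show ?thesis using g Op unfolding Op_def by (simp add: less_imp_le)
    qed
  qed
  then show ?thesis using that e0 by blast
qed

lemma conic_convex_hull_insert_zero_finite:
  fixes w :: "'a::real_vector"
  assumes finA: "finite A" and w: "w \<in> conic hull (convex hull (insert 0 A))"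
  obtains lam where "\<forall>g\<in>A. 0 \<le> lam g" "w = (\<Sum>g\<in>A. lam g *\<^sub>R g)"
proof -
  obtain c u where cu: "w = c *\<^sub>R u" "0 \<le> c" "u \<in> convex hull (insert 0 A)"
    using w unfolding conic_hull_explicit by blast
  then obtain \<mu> where \<mu>: "\<forall>z\<in>insert 0 A. 0 \<le> \<mu> z" "(\<Sum>z\<in>insert 0 A. \<mu> z *\<^sub>R z) = u"
    using convex_hull_finite[of "insert 0 A"] finA by auto
  have "(\<Sum>z\<in>insert 0 A. \<mu> z *\<^sub>R z) = (\<Sum>z\<in>A. \<mu> z *\<^sub>R z)"
    by (cases "0 \<in> A") (simp_all add: insert_absorb finA)
  then have "w = c *\<^sub>R (\<Sum>g\<in>A. \<mu> g *\<^sub>R g)" using cu(1) \<mu>(2) by simp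
  also have "\<dots> = (\<Sum>g\<in>A. (c * \<mu> g) *\<^sub>R g)" by (simp add: scaleR_sum_right)
  finally have "w = (\<Sum>g\<in>A. (c * \<mu> g) *\<^sub>R g)" .
  moreover have "\<forall>g\<in>A. 0 \<le> c * \<mu> g" using cu(2) \<mu>(1) by simp
  ultimately show ?thesis by (intro that)
qed

lemma minimizer_direction_in_tight_cone:
  fixes P :: "(real^'n) set"
  assumes full: "full_polytope P" and x: "x \<in> P" and wx: "w \<bullet> x = min_inner P w"
  defines "A \<equiv> {g\<in>ray_generators (normal_fan P). g \<bullet> x = min_inner P g}"
  obtains lam where "\<forall>g\<in>A. 0 \<le> lam g" "w = (\<Sum>g\<in>A. lam g *\<^sub>R g)"
proof -
  have finA: "finite A"
    using finite_normal_fan[OF full] by (simp add: A_def fan_rays_def)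
  define C where "C = conic hull (convex hull (insert 0 A))"
  have "w \<in> C"
  proof (rule ccontr)
    assume "w \<notin> C"
    moreover have "polytope (convex hull (insert 0 A))"
      using finA unfolding polytope_def by blast
    then have "closed C" unfolding C_def using closed_conic_hull_strong by blast
    moreover have "convex C" unfolding C_def by (simp add: convex_conic_hull)
    ultimately obtain d \<beta> where d: "d \<bullet> w < \<beta>" "\<forall>z\<in>C. \<beta> < d \<bullet> z"
      using separating_hyperplane_closed_point by blast
    have "0 \<in> C" unfolding C_def by (simp add: hull_inc)
    then have "\<beta> < d \<bullet> 0" using d(2) by blast
    then have b0: "\<beta> < 0" by simp
    have dA: "0 \<le> d \<bullet> g" if g: "g \<in> A" for g
    proof (rule ccontr)
      assume "\<not> 0 \<le> d \<bullet> g"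
      then have neg: "d \<bullet> g < 0" by simp
      have "g \<in> convex hull (insert 0 A)" using g by (simp add: hull_inc)
      then have "g \<in> C" unfolding C_def by (rule hull_inc)
      moreover have "0 \<le> \<beta> / (d \<bullet> g)" using b0 neg by (simp add: divide_nonpos_neg)
      ultimately have "(\<beta> / (d \<bullet> g)) *\<^sub>R g \<in> C"
        unfolding C_def using conic_mul[OF conic_conic_hull] by blast
      then have "\<beta> < d \<bullet> ((\<beta> / (d \<bullet> g)) *\<^sub>R g)" using d(2) by blast
      then show False using neg by simp
    qed
    have "0 \<le> g \<bullet> d" if "g \<in> ray_generators (normal_fan P)" "g \<bullet> x = min_inner P g" for g
      using dA[of g] that by (simp add: A_def inner_commute)
    then obtain \<epsilon> where e: "\<epsilon> > 0" "x + \<epsilon> *\<^sub>R d \<in> P"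
      using feasible_direction[OF full x] by blast
    have "min_inner P w \<le> w \<bullet> (x + \<epsilon> *\<^sub>R d)"
      using min_inner_le[OF full_polytope_compact[OF full] e(2)] .
    moreover have "w \<bullet> (x + \<epsilon> *\<^sub>R d) = w \<bullet> x + \<epsilon> * (d \<bullet> w)"
      by (simp add: inner_add_right inner_commute)
    moreover have "\<epsilon> * (d \<bullet> w) < 0" using e d b0 by (simp add: mult_pos_neg)
    ultimately show False using wx by simp
  qed
  then show ?thesis unfolding C_def by (rule conic_convex_hull_insert_zero_finite[OF finA _ that])
qed

lemma face_contains_vertex:
  fixes P :: "(real^'n) set"
  assumes "compact P" "convex P" "F face_of P" "F \<noteq> {}"
  obtains v where "v \<in> F" "{v} face_of P"
proof -
  have "compact F" "convex F"
    using face_of_imp_compact[OF assms(2,1,3)] face_of_imp_convex[OF assms(3)] by auto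
  then obtain v where "v extreme_point_of F" using extreme_point_exists_convex assms(4) by blast
  then show ?thesis
    using that face_of_trans[OF _ assms(3)] face_of_singleton extreme_point_of_def by blast
qed

lemma refinement_common_tight_vertices:
  fixes P1 P2 :: "(real^'n) set"
  assumes full1: "full_polytope P1" and full2: "full_polytope P2"
    and ref: "fan_refines (normal_fan P2) (normal_fan P1)"
  obtains v1 v2 A lam where "{v1} face_of P1" "{v2} face_of P2"
    "A \<subseteq> ray_generators (normal_fan P2)" "\<forall>y\<in>A. 0 \<le> lam y" "w = (\<Sum>y\<in>A. lam y *\<^sub>R y)"
    "\<forall>y\<in>A. y \<bullet> v1 = min_inner P1 y \<and> y \<bullet> v2 = min_inner P2 y"
proof -
  have c1: "compact P1" "convex P1" using full1 full_polytope_compact full_polytope_convex by auto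
  have c2: "compact P2" "convex P2" using full2 full_polytope_compact full_polytope_convex by auto
  define F where "F = P2 \<inter> {x. w \<bullet> x = min_inner P2 w}"
  have "F face_of P2" unfolding F_def
    using face_of_Int_supporting_hyperplane_ge[OF c2(2)] min_inner_le[OF c2(1)] by blast
  moreover have "F \<noteq> {}"
    using min_inner_attained[OF c2(1) full_polytope_nonempty[OF full2]] unfolding F_def by blast
  ultimately obtain v2 where v2: "v2 \<in> F" "{v2} face_of P2"
    using face_contains_vertex[OF c2] by blast
  have v2P: "v2 \<in> P2" using v2(1) by (simp add: F_def)
  define A where "A = {y\<in>ray_generators (normal_fan P2). y \<bullet> v2 = min_inner P2 y}"
  obtain lam where lam: "\<forall>y\<in>A. 0 \<le> lam y" "w = (\<Sum>y\<in>A. lam y *\<^sub>R y)"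
    using minimizer_direction_in_tight_cone[OF full2 v2P] v2(1) unfolding A_def F_def by blast
  have "normal_cone P2 {v2} \<in> normal_fan P2" using v2(2) unfolding normal_fan_def by blast
  then obtain G where G: "G face_of P1" "G \<noteq> {}" "normal_cone P2 {v2} \<subseteq> normal_cone P1 G"
    using ref unfolding fan_refines_def normal_fan_def by blast
  obtain v1 where v1: "v1 \<in> G" "{v1} face_of P1" using face_contains_vertex[OF c1 G(1,2)] .
  have v1P: "v1 \<in> P1" using v1 G(1) face_of_imp_subset by blast
  have "y \<bullet> v1 = min_inner P1 y \<and> y \<bullet> v2 = min_inner P2 y" if y: "y \<in> A" for y
  proof -
    have "y \<bullet> v2 = min_inner P2 y" using y by (simp add: A_def)
    then have "y \<in> normal_cone P1 G" using G(3) normal_cone_vertex_iff[OF c2(1) v2P] by blast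
    then have "y \<in> normal_cone P1 {v1}" using v1(1) unfolding normal_cone_def by blast
    then show ?thesis using normal_cone_vertex_iff[OF c1(1) v1P] \<open>y \<bullet> v2 = min_inner P2 y\<close> by blast
  qed
  moreover have "A \<subseteq> ray_generators (normal_fan P2)" by (auto simp: A_def)
  ultimately show ?thesis using that v1(2) v2(2) lam by blast
qed

lemma tight_set_transfer:
  fixes x z :: "'a::real_inner"
  assumes finT: "finite T" and finA: "finite A" and lam: "\<forall>y\<in>A. 0 \<le> lam y"
    and w: "(\<Sum>y\<in>T. y) = (\<Sum>y\<in>A. lam y *\<^sub>R y)"
    and Ax: "\<forall>y\<in>A. \<beta> y \<le> y \<bullet> x" and Az: "\<forall>y\<in>A. y \<bullet> z = \<beta> y"
    and Tx: "\<forall>y\<in>T. y \<bullet> x = \<beta> y" and Tz: "\<forall>y\<in>T. \<beta> y \<le> y \<bullet> z"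
  shows "\<forall>y\<in>T. y \<bullet> z = \<beta> y"
proof -
  have "(\<Sum>y\<in>T. y \<bullet> z) = (\<Sum>y\<in>A. lam y * \<beta> y)"
    using Az by (simp add: inner_sum_left[symmetric] w inner_sum_left)
  also have "\<dots> \<le> (\<Sum>y\<in>A. lam y * (y \<bullet> x))"
    using lam Ax by (intro sum_mono mult_left_mono) auto
  also have "\<dots> = (\<Sum>y\<in>T. y) \<bullet> x" by (simp add: w inner_sum_left)
  also have "\<dots> = (\<Sum>y\<in>T. \<beta> y)" using Tx by (simp add: inner_sum_left)
  finally have "(\<Sum>y\<in>T. y \<bullet> z - \<beta> y) \<le> 0" by (simp add: sum_subtractf)
  moreover have "\<forall>y\<in>T. 0 \<le> y \<bullet> z - \<beta> y" using Tz by simp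
  ultimately have "\<forall>y\<in>T. y \<bullet> z - \<beta> y = 0"
    using sum_nonneg_eq_0_iff[OF finT] sum_nonneg[of T "\<lambda>y. y \<bullet> z - \<beta> y"] by (meson antisym)
  then show ?thesis by simp
qed

lemma interpolation_tight_at_vertices:
  fixes P1 P2 :: "(real^'n) set"
  assumes full1: "full_polytope P1" and full2: "full_polytope P2"
    and ref: "fan_refines (normal_fan P2) (normal_fan P1)"
    and t: "0 \<le> t" "t \<le> 1"
    and x: "\<forall>y\<in>ray_generators (normal_fan P2). (1-t) * min_inner P1 y + t * min_inner P2 y \<le> y \<bullet> x"
  obtains v1 v2 where "{v1} face_of P1" "{v2} face_of P2"
    "\<And>y. y \<in> ray_generators (normal_fan P2) \<Longrightarrow> y \<bullet> x = (1-t) * min_inner P1 y + t * min_inner P2 y \<Longrightarrow>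
        (t < 1 \<longrightarrow> y \<bullet> v1 = min_inner P1 y) \<and> (0 < t \<longrightarrow> y \<bullet> v2 = min_inner P2 y)"
proof -
  let ?V = "ray_generators (normal_fan P2)"
  define \<beta> where "\<beta> y = (1-t) * min_inner P1 y + t * min_inner P2 y" for y
  define T where "T = {y\<in>?V. y \<bullet> x = \<beta> y}"
  have finV: "finite ?V" using finite_normal_fan[OF full2] by (simp add: fan_rays_def)
  obtain v1 v2 A lam where v1: "{v1} face_of P1" and v2: "{v2} face_of P2"
    and AV: "A \<subseteq> ?V" and lam: "\<forall>y\<in>A. 0 \<le> lam y" and w: "(\<Sum>y\<in>T. y) = (\<Sum>y\<in>A. lam y *\<^sub>R y)"
    and tA: "\<forall>y\<in>A. y \<bullet> v1 = min_inner P1 y \<and> y \<bullet> v2 = min_inner P2 y"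
    by (rule refinement_common_tight_vertices[OF full1 full2 ref, where w="\<Sum>y\<in>T. y"])
  have v1P: "v1 \<in> P1" and v2P: "v2 \<in> P2" using v1 v2 face_of_imp_subset by blast+
  define z where "z = (1-t) *\<^sub>R v1 + t *\<^sub>R v2"
  have slack: "y \<bullet> z - \<beta> y = (1-t) * (y \<bullet> v1 - min_inner P1 y) + t * (y \<bullet> v2 - min_inner P2 y)" for y
    by (simp add: z_def \<beta>_def inner_add_right algebra_simps)
  have slack1: "0 \<le> (1-t) * (y \<bullet> v1 - min_inner P1 y)" for y
    using min_inner_le[OF full_polytope_compact[OF full1] v1P, of y] t by simp
  have slack2: "0 \<le> t * (y \<bullet> v2 - min_inner P2 y)" for y
    using min_inner_le[OF full_polytope_compact[OF full2] v2P, of y] t by simp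
  have "\<forall>y\<in>T. y \<bullet> z = \<beta> y"
  proof (rule tight_set_transfer[OF _ finite_subset[OF AV finV] lam w])
    show "finite T" using finV by (simp add: T_def)
    show "\<forall>y\<in>A. \<beta> y \<le> y \<bullet> x" using x AV by (auto simp: \<beta>_def)
    show "\<forall>y\<in>A. y \<bullet> z = \<beta> y"
    proof
      fix y assume "y \<in> A"
      then have "y \<bullet> v1 = min_inner P1 y" "y \<bullet> v2 = min_inner P2 y" using tA by auto
      then show "y \<bullet> z = \<beta> y" using slack[of y] by simp
    qed
    show "\<forall>y\<in>T. y \<bullet> x = \<beta> y" by (simp add: T_def)
    show "\<forall>y\<in>T. \<beta> y \<le> y \<bullet> z"
    proof
      fix y show "\<beta> y \<le> y \<bullet> z" using slack[of y] slack1[of y] slack2[of y] by linarith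
    qed
  qed
  show ?thesis
  proof (rule that[OF v1 v2])
    fix y assume "y \<in> ?V" "y \<bullet> x = (1-t) * min_inner P1 y + t * min_inner P2 y"
    then have "y \<bullet> z = \<beta> y" using \<open>\<forall>y\<in>T. y \<bullet> z = \<beta> y\<close> by (simp add: T_def \<beta>_def)
    then have "(1-t) * (y \<bullet> v1 - min_inner P1 y) = 0" "t * (y \<bullet> v2 - min_inner P2 y) = 0"
      using slack[of y] slack1[of y] slack2[of y] by linarith+
    then show "(t < 1 \<longrightarrow> y \<bullet> v1 = min_inner P1 y) \<and> (0 < t \<longrightarrow> y \<bullet> v2 = min_inner P2 y)"
      by auto
  qed
qed

lemma vertex_strict_color:
  fixes P :: "(real^'n) set"
  assumes full: "full_polytope P" and v: "{v} face_of P" and sc: "simplicial_coloring (normal_fan P) L"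
    and feasible: "\<And>i \<rho>. i \<le> CARD('n) \<Longrightarrow> \<rho> \<in> L i \<Longrightarrow> \<beta> (ray_generator \<rho>) \<le> ray_generator \<rho> \<bullet> x"
    and transfer: "\<And>i \<rho>. i \<le> CARD('n) \<Longrightarrow> \<rho> \<in> L i \<Longrightarrow> ray_generator \<rho> \<bullet> x = \<beta> (ray_generator \<rho>) \<Longrightarrow>
        ray_generator \<rho> \<bullet> v = min_inner P (ray_generator \<rho>)"
  shows "\<exists>i\<le>CARD('n). \<forall>\<rho>\<in>L i. \<beta> (ray_generator \<rho>) < ray_generator \<rho> \<bullet> x"
proof -
  obtain i where i: "i \<le> CARD('n)"
    "\<And>\<rho>. \<rho> \<in> L i \<Longrightarrow> ray_generator \<rho> \<bullet> v \<noteq> min_inner P (ray_generator \<rho>)"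
    using vertex_missing_color[OF full v sc] by blast
  have "\<beta> (ray_generator \<rho>) < ray_generator \<rho> \<bullet> x" if "\<rho> \<in> L i" for \<rho>
    using feasible[OF i(1) that] transfer[OF i(1) that] i(2)[OF that] by linarith
  then have "\<forall>\<rho>\<in>L i. \<beta> (ray_generator \<rho>) < ray_generator \<rho> \<bullet> x" by blast
  then show ?thesis using i(1) by blast
qed

lemma interpolation_strict_color:
  fixes P1 P2 :: "(real^'n) set"
  assumes full1: "full_polytope P1" and full2: "full_polytope P2"
    and ref: "fan_refines (normal_fan P2) (normal_fan P1)"
    and sc1: "simplicial_coloring (normal_fan P1) L" and sc2: "simplicial_coloring (normal_fan P2) L"
    and t: "0 \<le> t" "t \<le> 1"
    and x: "\<forall>y\<in>ray_generators (normal_fan P2). (1-t) * min_inner P1 y + t * min_inner P2 y \<le> y \<bullet> x"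
  shows "\<exists>i\<le>CARD('n). \<forall>\<rho>\<in>L i.
    (1-t) * min_inner P1 (ray_generator \<rho>) + t * min_inner P2 (ray_generator \<rho>) < ray_generator \<rho> \<bullet> x"
proof -
  let ?\<beta> = "\<lambda>y. (1-t) * min_inner P1 y + t * min_inner P2 y"
  obtain v1 v2 where v1: "{v1} face_of P1" and v2: "{v2} face_of P2"
    and tight: "\<And>y. y \<in> ray_generators (normal_fan P2) \<Longrightarrow> y \<bullet> x = ?\<beta> y \<Longrightarrow>
        (t < 1 \<longrightarrow> y \<bullet> v1 = min_inner P1 y) \<and> (0 < t \<longrightarrow> y \<bullet> v2 = min_inner P2 y)"
    using interpolation_tight_at_vertices[OF full1 full2 ref t x] by blast
  have gen: "ray_generator \<rho> \<in> ray_generators (normal_fan P2)" if "i \<le> CARD('n)" "\<rho> \<in> L i" for i \<rho>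
    using simplicial_coloring_colors_rays[OF sc2] that by blast
  show ?thesis
  proof (cases "t < 1")
    case True
    show ?thesis
      by (rule vertex_strict_color[OF full1 v1 sc1]) (use x gen tight True in \<open>blast, blast\<close>)
  next
    case False
    then have "0 < t" by simp
    show ?thesis
      by (rule vertex_strict_color[OF full2 v2 sc2]) (use x gen tight \<open>0 < t\<close> in \<open>blast, blast\<close>)
  qed
qed

section \<open>Sphere coordinates\<close>

lemma continuous_map_vec_componentwise:
  fixes g :: "'a \<Rightarrow> real^'n"
  assumes "\<And>j. continuous_map X euclideanreal (\<lambda>x. g x $ j)"
  shows "continuous_map X euclidean g"
  using assms by (auto simp: continuous_map_atin intro: vec_tendstoI)

lemma continuous_map_Max:
  assumes "finite V" "V \<noteq> {}" "\<And>v. v \<in> V \<Longrightarrow> continuous_map X euclideanreal (g v)"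
  shows "continuous_map X euclideanreal (\<lambda>x. Max ((\<lambda>v. g v x) ` V))"
  using assms
proof (induction V rule: finite_ne_induct)
  case (singleton a)
  then show ?case by simp
next
  case (insert a F)
  have "(\<lambda>x. Max ((\<lambda>v. g v x) ` insert a F)) = (\<lambda>x. max (g a x) (Max ((\<lambda>v. g v x) ` F)))"
    using insert by (simp add: Max_insert)
  moreover have "continuous_map X euclideanreal (\<lambda>x. max (g a x) (Max ((\<lambda>v. g v x) ` F)))"
    using insert by (intro continuous_map_real_max) auto
  ultimately show ?case by simp
qed

lemma bij_betw_coord_enum: "bij_betw (coord_enum :: nat \<Rightarrow> 'n::finite) {..<CARD('n)} UNIV"
proof -
  have "\<exists>e. bij_betw e {..<CARD('n)} (UNIV :: 'n set)"
    using ex_bij_betw_nat_finite[of "UNIV :: 'n set"] by (simp add: atLeast0LessThan)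
  then show ?thesis unfolding coord_enum_def by (rule someI_ex)
qed

lemma sum_coord_enum: "(\<Sum>j\<in>UNIV. g j) = (\<Sum>i<CARD('n). g (coord_enum i :: 'n::finite))"
proof -
  have b: "bij_betw (coord_enum :: nat \<Rightarrow> 'n) {..<CARD('n)} UNIV" by (rule bij_betw_coord_enum)
  have im: "(coord_enum :: nat \<Rightarrow> 'n) ` {..<CARD('n)} = UNIV" and inj: "inj_on (coord_enum :: nat \<Rightarrow> 'n) {..<CARD('n)}"
    using b by (auto simp: bij_betw_def)
  have "(\<Sum>i<CARD('n). g (coord_enum i :: 'n)) = sum g ((coord_enum :: nat \<Rightarrow> 'n) ` {..<CARD('n)})"
    using sum.reindex[OF inj, of g] by (simp add: comp_def)
  then show ?thesis using im by simp
qed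

text \<open>Reads a point of \<open>nsphere (CARD('n) - 1)\<close> as a vector of \<open>real^'n\<close>, inverting the coordinate
  reading of \<open>polytope_chart\<close>.\<close>
definition vec_of_coords :: "(nat \<Rightarrow> real) \<Rightarrow> real^'n" where
  "vec_of_coords u = (\<chi> j. u (inv_into {..<CARD('n)} coord_enum j))"

lemma vec_of_coords_nth: "i < CARD('n) \<Longrightarrow> (vec_of_coords u :: real^'n) $ coord_enum i = u i"
  using bij_betw_coord_enum[where 'n='n] by (simp add: vec_of_coords_def bij_betw_def inv_into_f_f)

lemma inner_vec_of_coords: "(v :: real^'n) \<bullet> vec_of_coords u = (\<Sum>i<CARD('n). v $ coord_enum i * u i)"
proof -
  have "v \<bullet> vec_of_coords u = (\<Sum>j\<in>UNIV. v $ j * vec_of_coords u $ j)" by (simp add: inner_vec_def)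
  also have "\<dots> = (\<Sum>i<CARD('n). v $ coord_enum i * (vec_of_coords u :: real^'n) $ coord_enum i)"
    by (rule sum_coord_enum[of "\<lambda>j. v $ j * vec_of_coords u $ j"])
  also have "\<dots> = (\<Sum>i<CARD('n). v $ coord_enum i * u i)" by (simp add: vec_of_coords_nth)
  finally show ?thesis .
qed

lemma CARD_ge_1: "1 \<le> CARD('n::finite)"
  by (simp add: Suc_leI)

lemma norm_vec_of_coords:
  assumes "u \<in> topspace (nsphere (CARD('n) - 1))"
  shows "norm (vec_of_coords u :: real^'n) = 1"
proof -
  have "Suc (CARD('n) - 1) = CARD('n)" using CARD_ge_1[where 'n='n] by simp
  then have "{..CARD('n) - 1} = {..<CARD('n)}" by (metis lessThan_Suc_atMost)
  then have s: "(\<Sum>i<CARD('n). u i ^ 2) = 1" using assms by (simp add: nsphere)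
  have "(vec_of_coords u :: real^'n) \<bullet> vec_of_coords u = (\<Sum>i<CARD('n). u i ^ 2)"
    by (simp add: inner_vec_of_coords vec_of_coords_nth power2_eq_square)
  then have "norm (vec_of_coords u :: real^'n) ^ 2 = 1" using s by (simp add: power2_norm_eq_inner)
  then show ?thesis using norm_ge_zero[of "vec_of_coords u :: real^'n"] by (simp add: power2_eq_1_iff)
qed

lemma continuous_map_inner_vec_of_coords: "continuous_map (nsphere p) euclideanreal (\<lambda>u. (v :: real^'n) \<bullet> vec_of_coords u)"
  unfolding inner_vec_of_coords
  by (intro continuous_map_sum continuous_map_real_mult continuous_map_nsphere_projection) auto

lemma continuous_map_vec_of_coords_nth: "continuous_map (nsphere p) euclideanreal (\<lambda>u. (vec_of_coords u :: real^'n) $ j)"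
proof -
  obtain i where "i < CARD('n)" "coord_enum i = j"
    using bij_betw_coord_enum[where 'n='n] unfolding bij_betw_def by (metis UNIV_I imageE lessThan_iff)
  then have "(\<lambda>u. (vec_of_coords u :: real^'n) $ j) = (\<lambda>u. u i)" using vec_of_coords_nth by metis
  then show ?thesis using continuous_map_nsphere_projection by simp
qed

lemma simplex_chart_norm_pos:
  fixes z :: "nat \<Rightarrow> real"
  assumes s: "(\<Sum>i\<le>n0. z i) = 1" and i0: "i0 \<le> n0" "z i0 = 0"
  shows "0 < (\<Sum>i<n0. (z (Suc i) - 1 / real (Suc n0))\<^sup>2)"
proof (rule ccontr)
  assume "\<not> ?thesis"
  then have "(\<Sum>i<n0. (z (Suc i) - 1 / real (Suc n0))\<^sup>2) = 0"
    using sum_nonneg[of "{..<n0}" "\<lambda>i. (z (Suc i) - 1 / real (Suc n0))\<^sup>2"] by simp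
  then have all: "\<forall>i\<in>{..<n0}. (z (Suc i) - 1 / real (Suc n0))\<^sup>2 = 0"
    by (rule sum_nonneg_eq_0_iff[THEN iffD1, rotated 2]) auto
  then have zs: "z (Suc i) = 1 / real (Suc n0)" if "i < n0" for i using that by simp
  have "(\<Sum>i\<le>n0. z i) = z 0 + (\<Sum>i<n0. z (Suc i))"
    unfolding lessThan_Suc_atMost[symmetric] by (rule sum.lessThan_Suc_shift)
  also have "(\<Sum>i<n0. z (Suc i)) = real n0 / real (Suc n0)" using zs by simp
  finally have "z 0 = 1 - real n0 / real (Suc n0)" using s by simp
  also have "\<dots> = 1 / real (Suc n0)" by (simp add: field_simps)
  finally have z0: "z 0 = 1 / real (Suc n0)" .
  show False
  proof (cases i0)
    case 0 then show False using z0 i0 by simp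
  next
    case (Suc k) then show False using zs[of k] i0 by simp
  qed
qed

lemma continuous_map_simplex_chart:
  assumes n0: "1 \<le> n0"
    and c: "\<And>i. continuous_map X euclideanreal (\<lambda>x. z x i)"
    and s: "\<And>x. x \<in> topspace X \<Longrightarrow> (\<Sum>i\<le>n0. z x i) = 1"
    and zz: "\<And>x. x \<in> topspace X \<Longrightarrow> \<exists>i\<le>n0. z x i = 0"
  shows "continuous_map X (nsphere (n0 - 1)) (\<lambda>x. simplex_chart n0 (z x))"
proof -
  define L where "L x = sqrt (\<Sum>i<n0. (z x (Suc i) - 1 / real (Suc n0))\<^sup>2)" for x
  have Lp: "0 < L x" if "x \<in> topspace X" for x
    using simplex_chart_norm_pos[OF s[OF that]] zz[OF that] by (auto simp: L_def)
  have ch: "simplex_chart n0 (z x) = (\<lambda>i. if i < n0 then (z x (Suc i) - 1 / real (Suc n0)) / L x else 0)" for x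
    by (simp only: simplex_chart_def L_def Let_def)
  have cL: "continuous_map X euclideanreal L"
    unfolding L_def by (intro continuous_map_sqrt continuous_map_sum continuous_map_real_pow continuous_map_diff c) auto
  have cont: "continuous_map X (powertop_real UNIV) (\<lambda>x. simplex_chart n0 (z x))"
    unfolding continuous_map_componentwise_UNIV ch
  proof
    fix k
    show "continuous_map X euclideanreal (\<lambda>x. if k < n0 then (z x (Suc k) - 1 / real (Suc n0)) / L x else 0)"
    proof (cases "k < n0")
      case True
      have "continuous_map X euclideanreal (\<lambda>x. (z x (Suc k) - 1 / real (Suc n0)) / L x)"
        using Lp by (intro continuous_map_real_divide continuous_map_diff c cL continuous_map_canonical_const) (metis less_irrefl)
      then show ?thesis using True by simp
    next
      case False then show ?thesis by simp
    qed
  qed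
  have img: "simplex_chart n0 (z x) \<in> {y. (\<Sum>i\<le>n0 - 1. y i ^ 2) = 1 \<and> (\<forall>i>n0 - 1. y i = 0)}"
    if x: "x \<in> topspace X" for x
  proof -
    have e: "{..n0 - 1} = {..<n0}" using n0 by auto
    have L2: "(L x)\<^sup>2 = (\<Sum>i<n0. (z x (Suc i) - 1 / real (Suc n0))\<^sup>2)"
      unfolding L_def by (simp add: sum_nonneg)
    have "(\<Sum>i<n0. ((z x (Suc i) - 1 / real (Suc n0)) / L x)\<^sup>2)
        = (\<Sum>i<n0. (z x (Suc i) - 1 / real (Suc n0))\<^sup>2) / (L x)\<^sup>2"
      by (simp add: power_divide sum_divide_distrib)
    also have "\<dots> = 1" using L2 Lp[OF x] by (metis div_self less_irrefl zero_less_power)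
    finally show ?thesis unfolding ch e by auto
  qed
  show ?thesis unfolding nsphere
    using cont img by (auto intro!: continuous_map_into_subtopology)
qed

abbreviation cylinder :: "nat \<Rightarrow> (real \<times> (nat \<Rightarrow> real)) topology" where
  "cylinder p \<equiv> prod_topology (subtopology euclideanreal {0..1}) (nsphere p)"

lemma continuous_map_cylinder_fst: "continuous_map (cylinder p) euclideanreal fst"
  using continuous_map_fst continuous_map_in_subtopology by blast

lemma continuous_map_inner_snd: "continuous_map (prod_topology X (nsphere p)) euclideanreal (\<lambda>x. (v::real^'n) \<bullet> vec_of_coords (snd x))"
  using continuous_map_compose[OF continuous_map_snd continuous_map_inner_vec_of_coords, of X p v] by (simp add: o_def)

lemma topspace_cylinder: "topspace (cylinder p) = {0..1} \<times> topspace (nsphere p)"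
  by (simp add: topspace_prod_topology)

lemma Brouwer_degree2_eq_by_homotopy:
  assumes "continuous_map (cylinder p) (nsphere p) h"
    and "\<And>x. x \<in> topspace (nsphere p) \<Longrightarrow> h (0, x) = f x"
    and "\<And>x. x \<in> topspace (nsphere p) \<Longrightarrow> h (1, x) = g x"
  shows "Brouwer_degree2 p f = Brouwer_degree2 p g"
proof (rule Brouwer_degree2_homotopic)
  show "homotopic_with (\<lambda>x. True) (nsphere p) (nsphere p) f g"
    using assms by (subst homotopic_with) (auto intro!: exI[of _ h])
qed

section \<open>The canonical coloring map\<close>

definition radial_scale :: "(real^'n) set \<Rightarrow> (real^'n \<Rightarrow> real) \<Rightarrow> real^'n \<Rightarrow> real" where
  "radial_scale V d y = Max ((\<lambda>v. - (v \<bullet> y) / d v) ` V)"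

text \<open>If \<open>d > 0\<close> on \<open>V\<close>, the ray from \<open>c\<close> in direction \<open>y\<close> leaves \<open>{x. \<forall>v\<in>V. v \<bullet> c - d v \<le> v \<bullet> x}\<close>
  at \<open>radial_point V c d y\<close>.\<close>
definition radial_point :: "(real^'n) set \<Rightarrow> real^'n \<Rightarrow> (real^'n \<Rightarrow> real) \<Rightarrow> real^'n \<Rightarrow> real^'n" where
  "radial_point V c d y = c + (1 / radial_scale V d y) *\<^sub>R y"

definition color_slack :: "(nat \<Rightarrow> (real^'n) set set) \<Rightarrow> (real^'n \<Rightarrow> real) \<Rightarrow> real^'n \<Rightarrow> nat \<Rightarrow> real" where
  "color_slack L b x i = (\<Prod>\<rho>\<in>L i. ray_generator \<rho> \<bullet> x - b (ray_generator \<rho>))"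

definition color_coords :: "nat \<Rightarrow> (nat \<Rightarrow> (real^'n) set set) \<Rightarrow> (real^'n \<Rightarrow> real) \<Rightarrow> real^'n \<Rightarrow> nat \<Rightarrow> real" where
  "color_coords n L b x = (\<lambda>i. if i \<le> n then color_slack L b x i / (\<Sum>j\<le>n. color_slack L b x j) else 0)"

lemma radial_scale_ge:
  assumes "finite V" "v \<in> V"
  shows "- (v \<bullet> y) / d v \<le> radial_scale V d y"
  unfolding radial_scale_def using assms by (intro Max_ge) auto

lemma radial_scale_attained:
  assumes "finite V" "V \<noteq> {}"
  obtains v where "v \<in> V" "radial_scale V d y = - (v \<bullet> y) / d v"
proof -
  have "radial_scale V d y \<in> (\<lambda>v. - (v \<bullet> y) / d v) ` V"
    unfolding radial_scale_def using assms by (intro Max_in) auto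
  then show ?thesis using that by blast
qed

lemma radial_scale_pos:
  assumes "finite V" "v \<in> V" "v \<bullet> y < 0" "0 < d v"
  shows "0 < radial_scale V d y"
proof -
  have "v \<bullet> y / d v < 0" using assms(3,4) by (rule divide_neg_pos)
  then have "0 < - (v \<bullet> y) / d v" by simp
  then show ?thesis using radial_scale_ge[OF assms(1,2), of y d] by linarith
qed

lemma inner_radial_point: "v \<bullet> radial_point V c d y = v \<bullet> c + (v \<bullet> y) / radial_scale V d y"
  by (simp add: radial_point_def inner_add_right)

lemma radial_point_feasible:
  assumes "finite V" "v \<in> V" "0 < d v" and M: "0 < radial_scale V d y"
  shows "v \<bullet> c - d v \<le> v \<bullet> radial_point V c d y"
proof -
  have "- (v \<bullet> y) / d v \<le> radial_scale V d y" using radial_scale_ge[OF assms(1,2)] .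
  then have "- (v \<bullet> y) \<le> radial_scale V d y * d v" unfolding pos_divide_le_eq[OF assms(3)] .
  then have "- d v \<le> (v \<bullet> y) / radial_scale V d y" using M by (simp add: le_divide_eq algebra_simps)
  then show ?thesis by (simp add: inner_radial_point)
qed

lemma radial_point_tight:
  assumes "finite V" "V \<noteq> {}" "\<forall>v\<in>V. 0 < d v" and M: "0 < radial_scale V d y"
  obtains v where "v \<in> V" "v \<bullet> radial_point V c d y = v \<bullet> c - d v"
proof -
  obtain v where v: "v \<in> V" "radial_scale V d y = - (v \<bullet> y) / d v"
    using radial_scale_attained[OF assms(1,2)] by blast
  then have "(v \<bullet> y) / radial_scale V d y = - d v"
    using M assms(3) by (simp add: field_simps)
  then show ?thesis using that v(1) by (simp add: inner_radial_point)
qed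

text \<open>The polytope \<open>P\<^sub>t = {x. \<forall>v\<in>V. (1-t) * m1 v + t * m2 v \<le> v \<bullet> x}\<close> interpolates between two
  polytopes with the same facet normals \<open>V\<close>, and \<open>(1-t) *\<^sub>R c1 + t *\<^sub>R c2\<close> stays in its interior. The
  assumption \<open>strict_color\<close> keeps the normalizing sum of the canonical coloring map positive on the
  boundary of \<open>P\<^sub>t\<close>, so that \<open>homotopy\<close> is a homotopy of maps between spheres.\<close>
locale colored_polytope_path =
  fixes V :: "(real^'n) set" and L :: "nat \<Rightarrow> (real^'n) set set"
    and c1 c2 :: "real^'n" and m1 m2 :: "real^'n \<Rightarrow> real"
  assumes finite_V: "finite V"
    and slack_positive: "\<And>t v. 0 \<le> t \<Longrightarrow> t \<le> 1 \<Longrightarrow> v \<in> V \<Longrightarrow> 0 < (1-t) * (v \<bullet> c1 - m1 v) + t * (v \<bullet> c2 - m2 v)"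
    and V_negative: "\<And>y. y \<noteq> 0 \<Longrightarrow> \<exists>v\<in>V. v \<bullet> y < 0"
    and finite_colors: "\<And>i. i \<le> CARD('n) \<Longrightarrow> finite (L i)"
    and colors_in_V: "\<And>i \<rho>. i \<le> CARD('n) \<Longrightarrow> \<rho> \<in> L i \<Longrightarrow> ray_generator \<rho> \<in> V"
    and V_colored: "\<And>v. v \<in> V \<Longrightarrow> \<exists>i\<le>CARD('n). \<exists>\<rho>\<in>L i. ray_generator \<rho> = v"
    and strict_color: "\<And>t x. 0 \<le> t \<Longrightarrow> t \<le> 1 \<Longrightarrow> (\<forall>v\<in>V. (1-t) * m1 v + t * m2 v \<le> v \<bullet> x) \<Longrightarrow>
        \<exists>i\<le>CARD('n). \<forall>\<rho>\<in>L i. (1-t) * m1 (ray_generator \<rho>) + t * m2 (ray_generator \<rho>) < ray_generator \<rho> \<bullet> x"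
begin

definition slack :: "real \<Rightarrow> real^'n \<Rightarrow> real" where
  "slack t = (\<lambda>v. (1-t) * (v \<bullet> c1 - m1 v) + t * (v \<bullet> c2 - m2 v))"

definition bound :: "real \<Rightarrow> real^'n \<Rightarrow> real" where
  "bound t = (\<lambda>v. (1-t) * m1 v + t * m2 v)"

definition centre :: "real \<Rightarrow> real^'n" where
  "centre t = (1-t) *\<^sub>R c1 + t *\<^sub>R c2"

definition point :: "real \<Rightarrow> real^'n \<Rightarrow> real^'n" where
  "point t y = radial_point V (centre t) (slack t) y"

definition coords :: "real \<Rightarrow> real^'n \<Rightarrow> nat \<Rightarrow> real" where
  "coords t y = color_coords CARD('n) L (bound t) (point t y)"

definition homotopy :: "real \<times> (nat \<Rightarrow> real) \<Rightarrow> nat \<Rightarrow> real" where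
  "homotopy x = simplex_chart CARD('n) (coords (fst x) (vec_of_coords (snd x)))"

lemma V_nonempty: "V \<noteq> {}"
  using V_negative[of 1] by auto

lemma slack_pos: "0 \<le> t \<Longrightarrow> t \<le> 1 \<Longrightarrow> v \<in> V \<Longrightarrow> 0 < slack t v"
  using slack_positive by (simp add: slack_def)

lemma inner_centre_minus_bound: "v \<bullet> centre t - bound t v = slack t v"
  by (simp add: slack_def bound_def centre_def inner_add_right algebra_simps)

lemma radial_scale_slack_pos:
  assumes t: "0 \<le> t" "t \<le> 1" and y: "y \<noteq> 0"
  shows "0 < radial_scale V (slack t) y"
proof -
  obtain v where "v \<in> V" "v \<bullet> y < 0" using V_negative[OF y] by blast
  then show ?thesis using radial_scale_pos finite_V slack_pos[OF t] by blast
qed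

lemma inner_point_minus_bound:
  "v \<bullet> point t y - bound t v = slack t v + (v \<bullet> y) / radial_scale V (slack t) y"
  using inner_centre_minus_bound[of v t] by (simp add: point_def inner_radial_point)

lemma point_feasible:
  assumes t: "0 \<le> t" "t \<le> 1" and y: "y \<noteq> 0" and v: "v \<in> V"
  shows "bound t v \<le> v \<bullet> point t y"
  using radial_point_feasible[OF finite_V v slack_pos[OF t v] radial_scale_slack_pos[OF t y], of "centre t"]
    inner_centre_minus_bound[of v t] by (simp add: point_def)

lemma point_tight:
  assumes t: "0 \<le> t" "t \<le> 1" and y: "y \<noteq> 0"
  obtains v where "v \<in> V" "v \<bullet> point t y = bound t v"
proof -
  obtain v where "v \<in> V" "v \<bullet> point t y = v \<bullet> centre t - slack t v"
    using radial_point_tight[OF finite_V V_nonempty _ radial_scale_slack_pos[OF t y]] slack_pos[OF t]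
    unfolding point_def by blast
  then show ?thesis using that inner_centre_minus_bound[of v t] by simp
qed

lemma color_slack_nonneg:
  assumes t: "0 \<le> t" "t \<le> 1" and y: "y \<noteq> 0" and i: "i \<le> CARD('n)"
  shows "0 \<le> color_slack L (bound t) (point t y) i"
  unfolding color_slack_def
proof (rule prod_nonneg)
  fix \<rho> assume "\<rho> \<in> L i"
  then have "ray_generator \<rho> \<in> V" using colors_in_V i by blast
  then show "0 \<le> ray_generator \<rho> \<bullet> point t y - bound t (ray_generator \<rho>)" using point_feasible[OF t y] by simp
qed

lemma color_slack_zero:
  assumes t: "0 \<le> t" "t \<le> 1" and y: "y \<noteq> 0"
  shows "\<exists>i\<le>CARD('n). color_slack L (bound t) (point t y) i = 0"
proof -
  obtain v where v: "v \<in> V" "v \<bullet> point t y = bound t v" using point_tight[OF t y] .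
  obtain i \<rho> where i: "i \<le> CARD('n)" "\<rho> \<in> L i" "ray_generator \<rho> = v" using V_colored[OF v(1)] by blast
  have "color_slack L (bound t) (point t y) i = 0"
    unfolding color_slack_def using finite_colors[OF i(1)] i v by (intro prod_zero bexI[of _ \<rho>]) auto
  then show ?thesis using i(1) by blast
qed

lemma color_slack_sum_pos:
  assumes t: "0 \<le> t" "t \<le> 1" and y: "y \<noteq> 0"
  shows "0 < (\<Sum>j\<le>CARD('n). color_slack L (bound t) (point t y) j)"
proof -
  have "\<forall>v\<in>V. (1-t) * m1 v + t * m2 v \<le> v \<bullet> point t y"
    using point_feasible[OF t y] by (simp add: bound_def)
  then obtain i where i: "i \<le> CARD('n)" "\<forall>\<rho>\<in>L i. (1-t) * m1 (ray_generator \<rho>) + t * m2 (ray_generator \<rho>) < ray_generator \<rho> \<bullet> point t y"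
    using strict_color[OF t] by blast
  have "0 < color_slack L (bound t) (point t y) i"
    unfolding color_slack_def
  proof (rule prod_pos)
    fix \<rho> assume "\<rho> \<in> L i"
    then show "0 < ray_generator \<rho> \<bullet> point t y - bound t (ray_generator \<rho>)" using i by (simp add: bound_def)
  qed
  moreover have "\<forall>j\<in>{..CARD('n)}. 0 \<le> color_slack L (bound t) (point t y) j" using color_slack_nonneg[OF t y] by simp
  ultimately show ?thesis using i(1) by (intro sum_pos2[of "{..CARD('n)}" i]) auto
qed

lemma coords_simplex_boundary:
  assumes t: "0 \<le> t" "t \<le> 1" and y: "y \<noteq> 0"
  shows "(\<Sum>i\<le>CARD('n). coords t y i) = 1" "\<exists>i\<le>CARD('n). coords t y i = 0"
proof -
  let ?S = "(\<Sum>j\<le>CARD('n). color_slack L (bound t) (point t y) j)"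
  have S: "0 < ?S" using color_slack_sum_pos[OF t y] .
  have "(\<Sum>i\<le>CARD('n). coords t y i) = (\<Sum>i\<le>CARD('n). color_slack L (bound t) (point t y) i / ?S)"
    by (simp add: coords_def color_coords_def)
  also have "\<dots> = ?S / ?S" by (rule sum_divide_distrib[symmetric])
  also have "\<dots> = 1" using S by simp
  finally show "(\<Sum>i\<le>CARD('n). coords t y i) = 1" .
  obtain i where "i \<le> CARD('n)" "color_slack L (bound t) (point t y) i = 0" using color_slack_zero[OF t y] by blast
  then show "\<exists>i\<le>CARD('n). coords t y i = 0" by (auto simp: coords_def color_coords_def)
qed

lemma topspace_cylinderD: "x \<in> topspace (cylinder (CARD('n) - 1)) \<Longrightarrow> 0 \<le> fst x \<and> fst x \<le> 1 \<and> (vec_of_coords (snd x) :: real^'n) \<noteq> 0"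
proof -
  assume x: "x \<in> topspace (cylinder (CARD('n) - 1))"
  then have "fst x \<in> {0..1}" "snd x \<in> topspace (nsphere (CARD('n) - 1))" by (auto simp: topspace_cylinder)
  then show ?thesis using norm_vec_of_coords[where 'n='n, of "snd x"] by auto
qed

lemma continuous_map_slack: "continuous_map (cylinder (CARD('n) - 1)) euclideanreal (\<lambda>x. slack (fst x) v)"
  unfolding slack_def by (intro continuous_map_add continuous_map_real_mult continuous_map_diff continuous_map_cylinder_fst continuous_map_canonical_const)

lemma continuous_map_radial_scale: "continuous_map (cylinder (CARD('n) - 1)) euclideanreal (\<lambda>x. radial_scale V (slack (fst x)) (vec_of_coords (snd x)))"
  unfolding radial_scale_def
proof (rule continuous_map_Max[OF finite_V V_nonempty])
  fix v assume v: "v \<in> V"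
  show "continuous_map (cylinder (CARD('n) - 1)) euclideanreal (\<lambda>x. - (v \<bullet> vec_of_coords (snd x)) / slack (fst x) v)"
  proof (intro continuous_map_real_divide continuous_map_minus continuous_map_inner_snd continuous_map_slack)
    fix x assume "x \<in> topspace (cylinder (CARD('n) - 1))"
    then have "0 \<le> fst x" "fst x \<le> 1" using topspace_cylinderD by auto
    then show "slack (fst x) v \<noteq> 0" using slack_pos v by (metis less_irrefl)
  qed
qed

lemma radial_scale_pos_cylinder: "x \<in> topspace (cylinder (CARD('n) - 1)) \<Longrightarrow> 0 < radial_scale V (slack (fst x)) (vec_of_coords (snd x))"
  using topspace_cylinderD radial_scale_slack_pos by blast

lemma continuous_map_color_slack:
  assumes j: "j \<le> CARD('n)"
  shows "continuous_map (cylinder (CARD('n) - 1)) euclideanreal (\<lambda>x. color_slack L (bound (fst x)) (point (fst x) (vec_of_coords (snd x))) j)"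
proof -
  have eq: "color_slack L (bound (fst x)) (point (fst x) (vec_of_coords (snd x))) j =
     (\<Prod>\<rho>\<in>L j. slack (fst x) (ray_generator \<rho>) + (ray_generator \<rho> \<bullet> vec_of_coords (snd x)) / radial_scale V (slack (fst x)) (vec_of_coords (snd x)))" for x
    unfolding color_slack_def by (simp add: inner_point_minus_bound)
  have "continuous_map (cylinder (CARD('n) - 1)) euclideanreal (\<lambda>x. \<Prod>\<rho>\<in>L j. slack (fst x) (ray_generator \<rho>) + (ray_generator \<rho> \<bullet> vec_of_coords (snd x)) / radial_scale V (slack (fst x)) (vec_of_coords (snd x)))"
  proof (intro continuous_map_prod finite_colors[OF j] continuous_map_add continuous_map_real_divide continuous_map_slack continuous_map_inner_snd continuous_map_radial_scale)
    fix x assume "x \<in> topspace (cylinder (CARD('n) - 1))"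
    then show "radial_scale V (slack (fst x)) (vec_of_coords (snd x)) \<noteq> 0" using radial_scale_pos_cylinder by (metis less_irrefl)
  qed
  then show ?thesis by (simp only: eq)
qed

lemma continuous_map_coords: "continuous_map (cylinder (CARD('n) - 1)) euclideanreal (\<lambda>x. coords (fst x) (vec_of_coords (snd x)) i)"
proof (cases "i \<le> CARD('n)")
  case True
  have nz: "(\<Sum>j\<le>CARD('n). color_slack L (bound (fst x)) (point (fst x) (vec_of_coords (snd x))) j) \<noteq> 0"
    if "x \<in> topspace (cylinder (CARD('n) - 1))" for x
  proof -
    have "0 \<le> fst x" "fst x \<le> 1" "(vec_of_coords (snd x) :: real^'n) \<noteq> 0" using topspace_cylinderD that by auto
    then show ?thesis using color_slack_sum_pos by (metis less_irrefl)
  qed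
  have "continuous_map (cylinder (CARD('n) - 1)) euclideanreal (\<lambda>x. color_slack L (bound (fst x)) (point (fst x) (vec_of_coords (snd x))) i /
      (\<Sum>j\<le>CARD('n). color_slack L (bound (fst x)) (point (fst x) (vec_of_coords (snd x))) j))"
    apply (intro continuous_map_real_divide continuous_map_sum continuous_map_color_slack)
    using True nz by auto
  then show ?thesis using True by (simp add: coords_def color_coords_def)
next
  case False
  then show ?thesis by (simp add: coords_def color_coords_def)
qed

lemma continuous_map_homotopy: "continuous_map (cylinder (CARD('n) - 1)) (nsphere (CARD('n) - 1)) homotopy"
  unfolding homotopy_def
proof (rule continuous_map_simplex_chart[OF CARD_ge_1 continuous_map_coords])
  fix x assume "x \<in> topspace (cylinder (CARD('n) - 1))"
  then have "0 \<le> fst x" "fst x \<le> 1" "(vec_of_coords (snd x) :: real^'n) \<noteq> 0" using topspace_cylinderD by auto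
  then show "(\<Sum>i\<le>CARD('n). coords (fst x) (vec_of_coords (snd x)) i) = 1" "\<exists>i\<le>CARD('n). coords (fst x) (vec_of_coords (snd x)) i = 0"
    using coords_simplex_boundary by blast+
qed

lemma coords_0: "coords 0 y = color_coords CARD('n) L m1 (radial_point V c1 (\<lambda>v. v \<bullet> c1 - m1 v) y)"
proof -
  have "bound 0 = m1" "centre 0 = c1" "slack 0 = (\<lambda>v. v \<bullet> c1 - m1 v)" by (auto simp: bound_def centre_def slack_def)
  then show ?thesis by (simp add: coords_def point_def)
qed

lemma coords_1: "coords 1 y = color_coords CARD('n) L m2 (radial_point V c2 (\<lambda>v. v \<bullet> c2 - m2 v) y)"
proof -
  have "bound 1 = m2" "centre 1 = c2" "slack 1 = (\<lambda>v. v \<bullet> c2 - m2 v)" by (auto simp: bound_def centre_def slack_def)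
  then show ?thesis by (simp add: coords_def point_def)
qed

end

lemma colored_polytope_path_refinement:
  fixes P1 P2 :: "(real^'n) set"
  assumes full1: "full_polytope P1" and full2: "full_polytope P2"
    and ref: "fan_refines (normal_fan P2) (normal_fan P1)"
    and sc1: "simplicial_coloring (normal_fan P1) L" and sc2: "simplicial_coloring (normal_fan P2) L"
    and c1: "c1 \<in> interior P1" and c2: "c2 \<in> interior P2"
  shows "colored_polytope_path (ray_generators (normal_fan P2)) L c1 c2 (min_inner P1) (min_inner P2)"
proof
  let ?R = "fan_rays (normal_fan P2)"
  show "finite (ray_generators (normal_fan P2))"
    using finite_normal_fan[OF full2] by (simp add: fan_rays_def)
  show "0 < (1-t) * (v \<bullet> c1 - min_inner P1 v) + t * (v \<bullet> c2 - min_inner P2 v)"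
    if t: "0 \<le> t" "t \<le> 1" and v: "v \<in> ray_generators (normal_fan P2)" for t v
  proof -
    have "v \<noteq> 0" using v fan_ray_generator(2)[OF full2] by auto
    then have "0 < v \<bullet> c1 - min_inner P1 v" "0 < v \<bullet> c2 - min_inner P2 v"
      using min_inner_less_interior full1 full2 c1 c2 by auto
    then show ?thesis using t
      by (cases "t = 0") (auto intro: add_nonneg_pos simp: mult_nonneg_nonneg)
  qed
  show "\<exists>v\<in>ray_generators (normal_fan P2). v \<bullet> y < 0" if "y \<noteq> 0" for y
    using ray_generator_inner_negative[OF full2 that] .
  have LR: "\<And>i. i \<le> CARD('n) \<Longrightarrow> L i \<subseteq> ?R"
    using simplicial_coloring_colors_rays[OF sc2] .
  show "finite (L i)" if "i \<le> CARD('n)" for i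
    using LR[OF that] finite_normal_fan[OF full2] finite_subset[of "L i" ?R] by (simp add: fan_rays_def)
  show "ray_generator \<rho> \<in> ray_generators (normal_fan P2)" if "i \<le> CARD('n)" "\<rho> \<in> L i" for i \<rho>
    using LR that by blast
  show "\<exists>i\<le>CARD('n). \<exists>\<rho>\<in>L i. ray_generator \<rho> = v" if v: "v \<in> ray_generators (normal_fan P2)" for v
  proof -
    obtain \<rho> where "\<rho> \<in> ?R" "v = ray_generator \<rho>" using v by blast
    moreover have "?R = (\<Union>i\<in>{..CARD('n)}. L i)"
      using sc2 unfolding simplicial_coloring_def coloring_def by simp
    ultimately show ?thesis by auto
  qed
  show "\<exists>i\<le>CARD('n). \<forall>\<rho>\<in>L i.
      (1-t) * min_inner P1 (ray_generator \<rho>) + t * min_inner P2 (ray_generator \<rho>) < ray_generator \<rho> \<bullet> x"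
    if "0 \<le> t" "t \<le> 1"
      "\<forall>v\<in>ray_generators (normal_fan P2). (1-t) * min_inner P1 v + t * min_inner P2 v \<le> v \<bullet> x" for t x
    using interpolation_strict_color[OF full1 full2 ref sc1 sc2 that] .
qed

section \<open>Radial parametrization of the boundary\<close>

definition interior_point :: "(real^'n) set \<Rightarrow> real^'n" where
  "interior_point P = (SOME c. c \<in> interior P)"

lemma interior_point_in_interior:
  fixes P :: "(real^'n) set"
  shows "full_polytope P \<Longrightarrow> interior_point P \<in> interior P"
  unfolding interior_point_def using full_polytope_interior_nonempty by (simp add: some_in_eq)

lemma polytope_chart_eq:
  fixes P :: "(real^'n) set"
  shows "polytope_chart P x = (\<lambda>i. if i < CARD('n)
     then ((x - interior_point P) $ coord_enum i) / norm (x - interior_point P) else 0)"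
  unfolding polytope_chart_def interior_point_def Let_def ..

text \<open>The inverse of \<open>polytope_chart P\<close> (see \<open>inv_polytope_chart\<close>).\<close>
definition frontier_param :: "(real^'n) set \<Rightarrow> (nat \<Rightarrow> real) \<Rightarrow> real^'n" where
  "frontier_param P u = radial_point (ray_generators (normal_fan P)) (interior_point P)
     (\<lambda>v. v \<bullet> interior_point P - min_inner P v) (vec_of_coords u)"

lemma radial_scale_polytope_pos:
  fixes P :: "(real^'n) set"
  assumes full: "full_polytope P" and c: "c \<in> interior P" and y: "y \<noteq> 0"
  shows "0 < radial_scale (ray_generators (normal_fan P)) (\<lambda>v. v \<bullet> c - min_inner P v) y"
proof -
  obtain v where v: "v \<in> ray_generators (normal_fan P)" "v \<bullet> y < 0"
    using ray_generator_inner_negative[OF full y] by blast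
  then have "v \<noteq> 0" by auto
  then show ?thesis
    using radial_scale_pos[OF _ v] min_inner_less_interior[OF full c] finite_normal_fan[OF full]
    by (simp add: fan_rays_def)
qed

lemma radial_point_in_frontier:
  fixes P :: "(real^'n) set"
  assumes full: "full_polytope P" and c: "c \<in> interior P" and y: "y \<noteq> 0"
  shows "radial_point (ray_generators (normal_fan P)) c (\<lambda>v. v \<bullet> c - min_inner P v) y \<in> frontier P"
proof -
  let ?V = "ray_generators (normal_fan P)"
  let ?X = "radial_point ?V c (\<lambda>v. v \<bullet> c - min_inner P v) y"
  have finV: "finite ?V" using finite_normal_fan[OF full] by (simp add: fan_rays_def)
  have d: "\<forall>v\<in>?V. 0 < v \<bullet> c - min_inner P v"
    using min_inner_less_interior[OF full c] fan_ray_generator(2)[OF full] by auto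
  have M: "0 < radial_scale ?V (\<lambda>v. v \<bullet> c - min_inner P v) y"
    using radial_scale_polytope_pos[OF full c y] .
  have "min_inner P v \<le> v \<bullet> ?X" if "v \<in> ?V" for v
    using radial_point_feasible[OF finV that d[rule_format, OF that] M, of c] by simp
  then have "?X \<in> P" by (rule in_full_polytopeI[OF full])
  moreover have "?X \<notin> interior P"
  proof
    assume "?X \<in> interior P"
    moreover have "?V \<noteq> {}" using ray_generator_inner_negative[OF full y] by blast
    then obtain v where "v \<in> ?V" "v \<bullet> ?X = v \<bullet> c - (v \<bullet> c - min_inner P v)"
      using radial_point_tight[OF finV _ d M] by blast
    ultimately show False
      using min_inner_less_interior[OF full] fan_ray_generator(2)[OF full] by fastforce
  qed
  ultimately show ?thesis
    using full_polytope_closed[OF full] by (simp add: frontier_def closure_closed)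
qed

lemma interior_ray_before_closure:
  fixes P :: "(real^'n) set"
  assumes cv: "convex P" and c: "c \<in> interior P" and ab: "0 < a" "a < b" and y: "y \<noteq> 0"
    and b: "c + b *\<^sub>R y \<in> closure P"
  shows "c + a *\<^sub>R y \<in> interior P"
proof -
  have "c \<noteq> c + b *\<^sub>R y" "0 < a / b" "a / b < 1" using ab y by auto
  moreover have "c + a *\<^sub>R y = (1 - a / b) *\<^sub>R c + (a / b) *\<^sub>R (c + b *\<^sub>R y)"
    using ab by (simp add: algebra_simps)
  ultimately have "c + a *\<^sub>R y \<in> open_segment c (c + b *\<^sub>R y)" unfolding in_segment by blast
  then show ?thesis using in_interior_closure_convex_segment[OF cv c b] by blast
qed

lemma frontier_ray_unique:
  fixes P :: "(real^'n) set"
  assumes cv: "convex P" and c: "c \<in> interior P" and ab: "0 < a" "0 < b" and y: "y \<noteq> 0"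
    and a: "c + a *\<^sub>R y \<in> frontier P" and b: "c + b *\<^sub>R y \<in> frontier P"
  shows "a = b"
proof (rule ccontr)
  assume "a \<noteq> b"
  then consider "a < b" | "b < a" by linarith
  then show False
  proof cases
    case 1
    then show False using interior_ray_before_closure[OF cv c ab(1) 1 y] a b by (simp add: frontier_def)
  next
    case 2
    then show False using interior_ray_before_closure[OF cv c ab(2) 2 y] a b by (simp add: frontier_def)
  qed
qed

lemma polytope_chart_ray:
  fixes P :: "(real^'n) set"
  assumes u: "u \<in> topspace (nsphere (CARD('n) - 1))" and s: "0 < s"
  shows "polytope_chart P (interior_point P + s *\<^sub>R vec_of_coords u) = u"
proof
  fix i
  have "norm (s *\<^sub>R (vec_of_coords u :: real^'n)) = s" using norm_vec_of_coords[OF u] s by simp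
  moreover have "u i = 0" if "\<not> i < CARD('n)"
  proof -
    have "0 < CARD('n)" by simp
    then have "CARD('n) - 1 < i" using that by linarith
    then show ?thesis using u by (simp add: nsphere)
  qed
  ultimately show "polytope_chart P (interior_point P + s *\<^sub>R vec_of_coords u) i = u i"
    using s vec_of_coords_nth[of i u] u by (auto simp: polytope_chart_eq nsphere)
qed

lemma polytope_chart_eq_ray:
  fixes P :: "(real^'n) set"
  assumes z: "z \<noteq> interior_point P" and chart: "polytope_chart P z = u"
  shows "z = interior_point P + norm (z - interior_point P) *\<^sub>R vec_of_coords u"
proof -
  let ?c = "interior_point P"
  have "(z - ?c) $ j = norm (z - ?c) * (vec_of_coords u :: real^'n) $ j" for j
  proof -
    obtain i where i: "i < CARD('n)" "coord_enum i = j"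
      using bij_betw_coord_enum[where 'n='n] unfolding bij_betw_def by (metis UNIV_I imageE lessThan_iff)
    then have "((z - ?c) $ j) / norm (z - ?c) = (vec_of_coords u :: real^'n) $ j"
      using fun_cong[OF chart, of i] vec_of_coords_nth[OF i(1)] by (simp add: polytope_chart_eq)
    then show ?thesis using z by (simp add: field_simps)
  qed
  then show ?thesis by (simp add: vec_eq_iff algebra_simps)
qed

lemma frontier_param_in_frontier:
  fixes P :: "(real^'n) set"
  assumes "full_polytope P" "u \<in> topspace (nsphere (CARD('n) - 1))"
  shows "frontier_param P u \<in> frontier P"
proof -
  have "vec_of_coords u \<noteq> (0 :: real^'n)" using norm_vec_of_coords[OF assms(2)] by auto
  then show ?thesis unfolding frontier_param_def
    by (rule radial_point_in_frontier[OF assms(1) interior_point_in_interior[OF assms(1)]])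
qed

lemma inv_polytope_chart:
  fixes P :: "(real^'n) set"
  assumes full: "full_polytope P" and u: "u \<in> topspace (nsphere (CARD('n) - 1))"
  shows "inv_into (frontier P) (polytope_chart P) u = frontier_param P u"
proof -
  let ?c = "interior_point P"
  let ?y = "vec_of_coords u :: real^'n"
  let ?M = "radial_scale (ray_generators (normal_fan P)) (\<lambda>v. v \<bullet> ?c - min_inner P v) ?y"
  have c: "?c \<in> interior P" using interior_point_in_interior[OF full] .
  have y1: "norm ?y = 1" using norm_vec_of_coords[OF u] .
  have y0: "?y \<noteq> 0" using y1 by auto
  have M: "0 < ?M" using radial_scale_polytope_pos[OF full c y0] .
  have X: "frontier_param P u = ?c + (1 / ?M) *\<^sub>R ?y" by (simp add: frontier_param_def radial_point_def)
  have XF: "frontier_param P u \<in> frontier P" using frontier_param_in_frontier[OF full u] .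
  have not_c: "z \<noteq> ?c" if "z \<in> frontier P" for z
    using that c by (auto simp: frontier_def)
  have chart: "polytope_chart P (frontier_param P u) = u"
    using polytope_chart_ray[OF u, of "1 / ?M" P] M X by simp
  have uniq: "z = frontier_param P u" if z: "z \<in> frontier P" "polytope_chart P z = u" for z
  proof -
    define s where "s = norm (z - ?c)"
    have zeq: "z = ?c + s *\<^sub>R ?y"
      using polytope_chart_eq_ray[OF not_c[OF z(1)] z(2)] unfolding s_def .
    have "0 < s" using not_c[OF z(1)] by (simp add: s_def)
    moreover have "0 < 1 / ?M" using M by simp
    moreover have "?c + s *\<^sub>R ?y \<in> frontier P" using z(1) zeq by simp
    moreover have "?c + (1 / ?M) *\<^sub>R ?y \<in> frontier P" using XF X by simp
    ultimately have "s = 1 / ?M"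
      by (intro frontier_ray_unique[OF full_polytope_convex[OF full] c _ _ y0])
    then show ?thesis using zeq X by simp
  qed
  show ?thesis
    unfolding inv_into_def
  proof (rule some_equality)
    show "frontier_param P u \<in> frontier P \<and> polytope_chart P (frontier_param P u) = u"
      using XF chart by (rule conjI)
  next
    fix z assume "z \<in> frontier P \<and> polytope_chart P z = u"
    then show "z = frontier_param P u" using uniq by (elim conjE)
  qed
qed

lemma continuous_map_frontier_param:
  fixes P :: "(real^'n) set"
  assumes full: "full_polytope P"
  shows "continuous_map (nsphere (CARD('n) - 1)) (top_of_set (frontier P)) (frontier_param P)"
proof -
  let ?c = "interior_point P"
  let ?V = "ray_generators (normal_fan P)"
  let ?M = "\<lambda>u. radial_scale ?V (\<lambda>v. v \<bullet> ?c - min_inner P v) (vec_of_coords u :: real^'n)"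
  have c: "?c \<in> interior P" using interior_point_in_interior[OF full] .
  have finV: "finite ?V" using finite_normal_fan[OF full] by (simp add: fan_rays_def)
  have V: "?V \<noteq> {}" using ray_generator_inner_negative[OF full, of 1] by auto
  have d: "v \<bullet> ?c - min_inner P v \<noteq> 0" if "v \<in> ?V" for v
    using that min_inner_less_interior[OF full c] fan_ray_generator(2)[OF full] by fastforce
  have cM: "continuous_map (nsphere (CARD('n) - 1)) euclideanreal ?M"
    unfolding radial_scale_def using d
    by (intro continuous_map_Max[OF finV V] continuous_map_real_divide continuous_map_minus
        continuous_map_inner_vec_of_coords continuous_map_canonical_const) auto
  have M: "?M u \<noteq> 0" if "u \<in> topspace (nsphere (CARD('n) - 1))" for u
  proof -
    have "vec_of_coords u \<noteq> (0 :: real^'n)" using norm_vec_of_coords[OF that] by auto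
    then show ?thesis using radial_scale_polytope_pos[OF full c] by fastforce
  qed
  have "continuous_map (nsphere (CARD('n) - 1)) euclidean (frontier_param P)"
  proof (rule continuous_map_vec_componentwise)
    fix j
    have "continuous_map (nsphere (CARD('n) - 1)) euclideanreal
        (\<lambda>u. ?c $ j + (1 / ?M u) * (vec_of_coords u :: real^'n) $ j)"
      using M by (intro continuous_map_add continuous_map_real_mult continuous_map_real_divide
          continuous_map_canonical_const cM continuous_map_vec_of_coords_nth) auto
    then show "continuous_map (nsphere (CARD('n) - 1)) euclideanreal (\<lambda>u. frontier_param P u $ j)"
      by (simp add: frontier_param_def radial_point_def)
  qed
  then show ?thesis
    using frontier_param_in_frontier[OF full] by (auto intro: continuous_map_into_subtopology)
qed

lemma continuous_map_cylinder_base: "continuous_map (cylinder p) (cylinder p) (\<lambda>x. (0::real, snd x))"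
  by (intro continuous_map_pairedI continuous_map_snd) simp

lemma color_coords_frontier_param:
  fixes P :: "(real^'n) set"
  assumes full: "full_polytope P" and sc: "simplicial_coloring (normal_fan P) L"
  shows "continuous_map (cylinder (CARD('n) - 1)) euclideanreal
      (\<lambda>x. color_coords CARD('n) L (min_inner P) (frontier_param P (snd x)) i)"
    and "u \<in> topspace (nsphere (CARD('n) - 1)) \<Longrightarrow>
      (\<Sum>i\<le>CARD('n). color_coords CARD('n) L (min_inner P) (frontier_param P u) i) = 1"
proof -
  let ?c = "interior_point P"
  have "fan_refines (normal_fan P) (normal_fan P)" by (auto simp: fan_refines_def)
  then interpret F: colored_polytope_path "ray_generators (normal_fan P)" L ?c ?c "min_inner P" "min_inner P"
    using colored_polytope_path_refinement[OF full full _ sc sc] interior_point_in_interior[OF full] by blast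
  have E: "F.coords 0 (vec_of_coords u) = color_coords CARD('n) L (min_inner P) (frontier_param P u)" for u
    by (simp add: F.coords_0 frontier_param_def)
  show "continuous_map (cylinder (CARD('n) - 1)) euclideanreal
      (\<lambda>x. color_coords CARD('n) L (min_inner P) (frontier_param P (snd x)) i)"
    using continuous_map_compose[OF continuous_map_cylinder_base F.continuous_map_coords[of i]]
    by (simp add: o_def E)
  show "(\<Sum>i\<le>CARD('n). color_coords CARD('n) L (min_inner P) (frontier_param P u) i) = 1"
    if "u \<in> topspace (nsphere (CARD('n) - 1))"
    using F.coords_simplex_boundary(1)[of 0 "vec_of_coords u"] norm_vec_of_coords[OF that] E by force
qed

section \<open>Degrees of compatible maps\<close>

lemma compatible_map_in_simplex:
  fixes P :: "(real^'n) set"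
  assumes "compatible_map P L f" "x \<in> frontier P"
  shows "f x \<in> standard_simplex CARD('n)"
proof -
  have "continuous_map (top_of_set (frontier P))
      (subtopology (powertop_real UNIV) (simplex_boundary CARD('n))) f"
    using assms(1) by (simp add: compatible_map_def)
  then have "f x \<in> topspace (subtopology (powertop_real UNIV) (simplex_boundary CARD('n)))"
    using assms(2) by (auto simp: continuous_map_def Pi_iff)
  then show ?thesis by (simp add: simplex_boundary_def)
qed

lemma compatible_map_facet_color:
  fixes P :: "(real^'n) set"
  assumes full: "full_polytope P" and col: "coloring (normal_fan P) L"
    and f: "compatible_map P L f" and x: "x \<in> frontier P"
  obtains i where "i \<le> CARD('n)" "f x i = 0" "color_slack L (min_inner P) x i = 0"
proof -
  obtain G where G: "G facet_of P" "x \<in> G" using frontier_full_polytope_facet[OF full x] by blast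
  let ?\<rho> = "normal_cone P G"
  obtain i where i: "i \<le> CARD('n)" "?\<rho> \<in> L i"
    using normal_cone_facet_in_fan_rays[OF full G(1)] col unfolding coloring_def by auto
  have "G face_of P" "G \<noteq> {}" "G \<noteq> P" using G(1) by (auto simp: facet_of_def)
  then have "f x \<in> psi_C P L G" using f G(2) unfolding compatible_map_def by blast
  moreover have "G \<subseteq> color_set P L i" unfolding color_set_def using G(1) i(2) by blast
  ultimately have "f x i = 0" using i(1) by (simp add: psi_C_def simplex_face_def)
  moreover have "finite (L i)"
    using col i(1) finite_normal_fan[OF full] finite_subset unfolding coloring_def fan_rays_def
    by (metis (no_types, lifting) UN_I atMost_iff mem_Collect_eq subsetI)
  then have "color_slack L (min_inner P) x i = 0"
    unfolding color_slack_def using i(2) ray_generator_facet_tight[OF full G] by (intro prod_zero bexI[of _ ?\<rho>]) auto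
  ultimately show ?thesis using that i(1) by blast
qed

lemma comb_degree_eq_color_coords:
  fixes P :: "(real^'n) set"
  assumes full: "full_polytope P" and sc: "simplicial_coloring (normal_fan P) L"
    and f: "compatible_map P L f"
  shows "comb_degree P f = Brouwer_degree2 (CARD('n) - 1)
    (\<lambda>u. simplex_chart CARD('n) (color_coords CARD('n) L (min_inner P) (frontier_param P u)))"
proof -
  let ?N = "CARD('n)"
  let ?X = "\<lambda>x. frontier_param P (snd x)"
  let ?E = "\<lambda>x. color_coords ?N L (min_inner P) (?X x)"
  define z where "z x = (\<lambda>i. (1 - fst x) * f (?X x) i + fst x * ?E x i)" for x
  have cX: "continuous_map (cylinder (?N - 1)) (top_of_set (frontier P)) ?X"
    using continuous_map_compose[OF continuous_map_snd continuous_map_frontier_param[OF full]]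
    by (simp add: o_def)
  have "continuous_map (top_of_set (frontier P)) (subtopology (powertop_real UNIV) (simplex_boundary ?N)) f"
    using f by (simp add: compatible_map_def)
  then have "continuous_map (top_of_set (frontier P)) (powertop_real UNIV) f"
    by (simp add: continuous_map_in_subtopology)
  then have fi: "continuous_map (top_of_set (frontier P)) euclideanreal ((\<lambda>g. g i) \<circ> f)" for i
    by (rule continuous_map_compose) (rule continuous_map_product_projection, simp)
  have "continuous_map (cylinder (?N - 1)) euclideanreal (\<lambda>x. f (?X x) i)" for i
    using continuous_map_compose[OF cX fi] by (simp add: o_def)
  then have cz: "continuous_map (cylinder (?N - 1)) euclideanreal (\<lambda>x. z x i)" for i
    unfolding z_def
    by (intro continuous_map_add continuous_map_real_mult continuous_map_diff continuous_map_cylinder_fst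
        color_coords_frontier_param(1)[OF full sc] continuous_map_canonical_const)
  have z_boundary: "(\<Sum>i\<le>?N. z x i) = 1 \<and> (\<exists>i\<le>?N. z x i = 0)"
    if x: "x \<in> topspace (cylinder (?N - 1))" for x
  proof -
    have u: "snd x \<in> topspace (nsphere (?N - 1))" using x by (auto simp: topspace_cylinder)
    have XF: "?X x \<in> frontier P" using frontier_param_in_frontier[OF full u] .
    have "(\<Sum>i\<le>?N. f (?X x) i) = 1"
      using compatible_map_in_simplex[OF f XF] by (simp add: standard_simplex_def)
    then have "(\<Sum>i\<le>?N. z x i) = 1"
      using color_coords_frontier_param(2)[OF full sc u] by (simp add: z_def sum.distrib flip: sum_distrib_left)
    moreover obtain i where "i \<le> ?N" "f (?X x) i = 0" "color_slack L (min_inner P) (?X x) i = 0"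
      using compatible_map_facet_color[OF full _ f XF] sc unfolding simplicial_coloring_def by blast
    then have "i \<le> ?N" "z x i = 0" by (simp_all add: z_def color_coords_def)
    ultimately show ?thesis by blast
  qed
  have "continuous_map (cylinder (?N - 1)) (nsphere (?N - 1)) (\<lambda>x. simplex_chart ?N (z x))"
    using z_boundary by (intro continuous_map_simplex_chart[OF CARD_ge_1 cz]) auto
  then have "Brouwer_degree2 (?N - 1) (simplex_chart ?N \<circ> f \<circ> inv_into (frontier P) (polytope_chart P)) =
      Brouwer_degree2 (?N - 1) (\<lambda>u. simplex_chart ?N (?E (0, u)))"
    by (rule Brouwer_degree2_eq_by_homotopy) (simp_all add: z_def inv_polytope_chart[OF full])
  then show ?thesis by (simp add: comb_degree_def)
qed

lemma color_coords_degree_refinement: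
  fixes P1 P2 :: "(real^'n) set"
  assumes full1: "full_polytope P1" and full2: "full_polytope P2"
    and ref: "fan_refines (normal_fan P2) (normal_fan P1)"
    and rays: "fan_rays (normal_fan P1) = fan_rays (normal_fan P2)"
    and sc1: "simplicial_coloring (normal_fan P1) L" and sc2: "simplicial_coloring (normal_fan P2) L"
  shows "Brouwer_degree2 (CARD('n) - 1)
      (\<lambda>u. simplex_chart CARD('n) (color_coords CARD('n) L (min_inner P1) (frontier_param P1 u))) =
    Brouwer_degree2 (CARD('n) - 1)
      (\<lambda>u. simplex_chart CARD('n) (color_coords CARD('n) L (min_inner P2) (frontier_param P2 u)))"
proof -
  interpret F: colored_polytope_path "ray_generators (normal_fan P2)" L "interior_point P1"
    "interior_point P2" "min_inner P1" "min_inner P2"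
    using colored_polytope_path_refinement[OF full1 full2 ref sc1 sc2]
      interior_point_in_interior full1 full2 by blast
  show ?thesis
    by (rule Brouwer_degree2_eq_by_homotopy[OF F.continuous_map_homotopy])
      (simp_all add: F.homotopy_def F.coords_0 F.coords_1 frontier_param_def rays)
qed

theorem theorem1p4:
  fixes S S' :: "(real^'n) set set" and L :: "nat \<Rightarrow> (real^'n) set set"
  assumes "projective_fan S" and "projective_fan S'"
    and "fan_refines S' S" and "fan_rays S = fan_rays S'"
    and "simplicial_coloring S L"
  shows "simplicial_coloring S' L \<and>
    (\<forall>P P' f f'. full_polytope P \<and> normal_fan P = S \<and> compatible_map P L f \<and>
                 full_polytope P' \<and> normal_fan P' = S' \<and> compatible_map P' L f'
                 \<longrightarrow> comb_degree P f = comb_degree P' f')"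
proof -
  obtain P0 where "full_polytope P0" "S = normal_fan P0"
    using assms(1) unfolding projective_fan_def by blast
  then have "finite S" using finite_normal_fan by blast
  then have sc': "simplicial_coloring S' L"
    using simplicial_coloring_refinement assms(3-5) by blast
  moreover have "comb_degree P f = comb_degree P' f'"
    if P: "full_polytope P" "normal_fan P = S" "compatible_map P L f"
      and P': "full_polytope P'" "normal_fan P' = S'" "compatible_map P' L f'" for P P' f f'
  proof -
    have sc: "simplicial_coloring (normal_fan P) L" "simplicial_coloring (normal_fan P') L"
      using P(2) P'(2) assms(5) sc' by simp_all
    have "comb_degree P f = Brouwer_degree2 (CARD('n) - 1)
        (\<lambda>u. simplex_chart CARD('n) (color_coords CARD('n) L (min_inner P) (frontier_param P u)))"
      using comb_degree_eq_color_coords[OF P(1) sc(1) P(3)] .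
    also have "\<dots> = Brouwer_degree2 (CARD('n) - 1)
        (\<lambda>u. simplex_chart CARD('n) (color_coords CARD('n) L (min_inner P') (frontier_param P' u)))"
      using color_coords_degree_refinement[OF P(1) P'(1) _ _ sc] P(2) P'(2) assms(3,4) by simp
    also have "\<dots> = comb_degree P' f'"
      using comb_degree_eq_color_coords[OF P'(1) sc(2) P'(3)] by simp
    finally show ?thesis .
  qed
  ultimately show ?thesis by blast
qed

end
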